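(* Let $n\ge1$, $m,m'\ge0$. The subring of $S_n$-invariants of $\mathbb{C}[X_{n\times m};\Theta_{n\times m'}]$ is generated as a $\mathbb{C}$-algebra by the power sum generators $p_S$, where $S$ runs over all multisets over $[m]\cup[\overline{m'}]$ with no repeated barred entries and $|S|\le n$.
   Context: $\mathbb{C}[X_{n\times m};\Theta_{n\times m'}]$ is the associative $\mathbb{C}$-algebra generated by $x_{rk}$ ($1\le r\le n$, $1\le k\le m$) and $\theta_{ri}$ ($1\le r\le n$, $1\le i\le m'$) with: the $x_{rk}$ commute with each other and with all $\theta_{si}$; $\theta_{ri}\theta_{sj}=-\theta_{sj}\theta_{ri}$ for $(r,i)\ne(s,j)$; $\theta_{ri}^2=0$. $S_n$ acts by algebra automorphisms via $\sigma(x_{rk})=x_{\sigma(r)k}$, $\sigma(\theta_{ri})=\theta_{\sigma(r)i}$. Multisets are over $\{1,\dots,m\}\cup\{\bar1,\dots,\overline{m'}\}$ (entries $\bar j$ barred). For $S=\{\!\{1^{a_1},\dots,m^{a_m},\bar s_1,\dots,\bar s_k\}\!\}$ with $s_1<\dots<s_k$ distinct, $|S|=a_1+\dots+a_m+k$ and $p_S=\sum_{r=1}^n x_{r1}^{a_1}\cdots x_{rm}^{a_m}\theta_{rs_1}\cdots\theta_{rs_k}$ (so $p_\emptyset=n$). *)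

theory Defs
  imports Complex_Main "HOL-Library.Multiset" "HOL-Library.Product_Lexorder"
    "HOL-Combinatorics.Permutations"
begin

(* The algebra C[X_{n x m}; Theta_{n x m'}], indices 1-based as in the paper.
   A monomial is x^e * theta_A, where e :: (r,k) => exponent and A is a finite set
   of indices (r,i); theta_A denotes the product of the theta_{ri}, (r,i) in A,
   taken in increasing lexicographic order of (r,i). *)

type_synonym mono = "((nat \<times> nat) \<Rightarrow> nat) \<times> (nat \<times> nat) set"
type_synonym salg = "mono \<Rightarrow> complex"

definition valid_mono :: "nat \<Rightarrow> nat \<Rightarrow> nat \<Rightarrow> mono \<Rightarrow> bool" where
  "valid_mono n m m' \<mu> \<longleftrightarrow>
     (\<forall>r k. fst \<mu> (r, k) \<noteq> 0 \<longrightarrow> r \<in> {1..n} \<and> k \<in> {1..m}) \<and>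
     snd \<mu> \<subseteq> {1..n} \<times> {1..m'}"

definition supp :: "salg \<Rightarrow> mono set" where
  "supp f = {\<mu>. f \<mu> \<noteq> 0}"

definition carrier_alg :: "nat \<Rightarrow> nat \<Rightarrow> nat \<Rightarrow> salg set" where
  "carrier_alg n m m' = {f. finite (supp f) \<and> (\<forall>\<mu>\<in>supp f. valid_mono n m m' \<mu>)}"

(* theta_A * theta_B = theta_sign A B * theta_{A \<union> B} for disjoint A, B *)
definition theta_sign :: "(nat \<times> nat) set \<Rightarrow> (nat \<times> nat) set \<Rightarrow> complex" where
  "theta_sign A B = (-1) ^ card {(a, b). a \<in> A \<and> b \<in> B \<and> b < a}"

definition mono_mul :: "mono \<Rightarrow> mono \<Rightarrow> mono" where
  "mono_mul \<alpha> \<beta> = ((\<lambda>p. fst \<alpha> p + fst \<beta> p), snd \<alpha> \<union> snd \<beta>)"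

definition alg_mul :: "salg \<Rightarrow> salg \<Rightarrow> salg" where
  "alg_mul f g = (\<lambda>\<mu>. \<Sum>\<alpha>\<in>supp f. \<Sum>\<beta>\<in>supp g.
      if snd \<alpha> \<inter> snd \<beta> = {} \<and> mono_mul \<alpha> \<beta> = \<mu>
      then theta_sign (snd \<alpha>) (snd \<beta>) * f \<alpha> * g \<beta> else 0)"

definition alg_add :: "salg \<Rightarrow> salg \<Rightarrow> salg" where
  "alg_add f g = (\<lambda>\<mu>. f \<mu> + g \<mu>)"

definition alg_const :: "complex \<Rightarrow> salg" where
  "alg_const c = (\<lambda>\<mu>. if \<mu> = ((\<lambda>_. 0), {}) then c else 0)"

inductive_set gen_subalg :: "salg set \<Rightarrow> salg set" for G where
  const: "alg_const c \<in> gen_subalg G"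
| gen: "g \<in> G \<Longrightarrow> g \<in> gen_subalg G"
| add: "f \<in> gen_subalg G \<Longrightarrow> g \<in> gen_subalg G \<Longrightarrow> alg_add f g \<in> gen_subalg G"
| mul: "f \<in> gen_subalg G \<Longrightarrow> g \<in> gen_subalg G \<Longrightarrow> alg_mul f g \<in> gen_subalg G"

(* S_n action: sigma(x_{rk}) = x_{sigma(r) k}, sigma(theta_{ri}) = theta_{sigma(r) i} *)
definition mono_act :: "(nat \<Rightarrow> nat) \<Rightarrow> mono \<Rightarrow> mono" where
  "mono_act \<sigma> \<alpha> = ((\<lambda>(r, k). fst \<alpha> (inv \<sigma> r, k)), (\<lambda>(r, i). (\<sigma> r, i)) ` snd \<alpha>)"

(* sign from reordering the product of theta_{sigma(r) i}, (r,i) in A ascending *)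
definition perm_sign :: "(nat \<Rightarrow> nat) \<Rightarrow> (nat \<times> nat) set \<Rightarrow> complex" where
  "perm_sign \<sigma> A = (-1) ^ card {(a, b). a \<in> A \<and> b \<in> A \<and> a < b \<and>
       (\<sigma> (fst b), snd b) < (\<sigma> (fst a), snd a)}"

definition alg_act :: "(nat \<Rightarrow> nat) \<Rightarrow> salg \<Rightarrow> salg" where
  "alg_act \<sigma> f = (\<lambda>\<mu>. \<Sum>\<alpha>\<in>supp f.
      if mono_act \<sigma> \<alpha> = \<mu> then perm_sign \<sigma> (snd \<alpha>) * f \<alpha> else 0)"

(* Multisets over [m] \<union> [bar m']: Inl k stands for k, Inr j for bar j *)
definition row_mono :: "nat \<Rightarrow> (nat + nat) multiset \<Rightarrow> mono" where
  "row_mono r S = ((\<lambda>(r', k). if r' = r then count S (Inl k) else 0),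
                   {(r, i) | i. Inr i \<in># S})"

(* p_S = \<Sum>_{r=1..n} x_{r1}^{a_1}...x_{rm}^{a_m} theta_{r s_1}...theta_{r s_k} *)
definition psum :: "nat \<Rightarrow> (nat + nat) multiset \<Rightarrow> salg" where
  "psum n S = (\<lambda>\<mu>. of_nat (card {r \<in> {1..n}. row_mono r S = \<mu>}))"

definition admissible_ms :: "nat \<Rightarrow> nat \<Rightarrow> nat \<Rightarrow> (nat + nat) multiset \<Rightarrow> bool" where
  "admissible_ms n m m' S \<longleftrightarrow>
     set_mset S \<subseteq> Inl ` {1..m} \<union> Inr ` {1..m'} \<and>
     (\<forall>j. count S (Inr j) \<le> 1) \<and> size S \<le> n"

end

theory Submission
  imports Defs "HOL-Library.Function_Algebras" "HOL-Combinatorics.Multiset_Permutations"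
begin

text \<open>Write \<open>E(T\<^sub>1, \<dots>, T\<^sub>k)\<close> for the augmented power sum: the words \<open>T\<^sub>j\<close> (monomials in one
  row) placed in pairwise distinct rows, summed over all placements. It is \<open>S\<^sub>n\<close>-invariant,
  \<open>E(T) = \<plusminus>p\<^sub>T\<close>, and it vanishes when \<open>k > n\<close>. Multiplying \<open>p\<^sub>T\<close> by \<open>E(Ts)\<close> and sorting the terms
  by whether the row of \<open>T\<close> is new or that of some \<open>T\<^sub>j\<close> gives
  \<open>p\<^sub>T E(Ts) = E(T, Ts) \<plusminus> \<Sum>\<^sub>j E(Ts with T merged into T\<^sub>j)\<close>. By induction, every \<open>E\<close> is a
  polynomial in power sums of its total degree and below, and
  \<open>E(T\<^sub>1, \<dots>, T\<^sub>k) \<equiv> (-1)\<^bsup>k-1\<^esup>(k-1)! p\<^bsub>T\<^sub>1\<dots>T\<^sub>k\<^esub>\<close> modulo power sums of smaller degree. Splitting a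
  word of length \<open>> n\<close> into single letters, the left side is \<open>0\<close>, so every power sum is generated by
  those of degree \<open>\<le> n\<close>. Finally, an invariant is \<open>1/n!\<close> times its orbit sum, and the orbit sum of a
  monomial is the augmented power sum of its rows.\<close>

definition smul :: "complex \<Rightarrow> salg \<Rightarrow> salg" where
  "smul c f = (\<lambda>\<nu>. c * f \<nu>)"

definition monomial :: "mono \<Rightarrow> salg" where
  "monomial \<mu> = (\<lambda>\<nu>. of_bool (\<nu> = \<mu>))"

lemma sum_fun_apply: "(sum F I) x = sum (\<lambda>i. F i x) I"
  by (induction I rule: infinite_finite_induct) auto

lemma alg_add_eq_plus: "alg_add f g = f + g"
  by (auto simp: alg_add_def)

lemma smul_sum: "smul c (sum F I) = (\<Sum>i\<in>I. smul c (F i))"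
  by (auto simp: smul_def sum_fun_apply sum_distrib_left)

lemma smul_smul: "smul a (smul b f) = smul (a * b) f"
  by (auto simp: smul_def)

lemma smul_one [simp]: "smul 1 f = f"
  by (auto simp: smul_def)

lemma smul_zero [simp]: "smul 0 f = 0" "smul c 0 = 0"
  by (auto simp: smul_def)

lemma supp_iff: "\<mu> \<in> supp f \<longleftrightarrow> f \<mu> \<noteq> 0"
  by (simp add: supp_def)

lemma supp_zero [simp]: "supp 0 = {}"
  by (simp add: supp_def)

lemma supp_monomial: "supp (monomial \<mu>) = {\<mu>}"
  by (auto simp: supp_def monomial_def)

lemma supp_smul: "supp (smul c f) \<subseteq> supp f"
  by (auto simp: supp_def smul_def)

lemma supp_plus: "supp (f + g) \<subseteq> supp f \<union> supp g"
  by (auto simp: supp_def)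

lemma supp_alg_const: "supp (alg_const c) \<subseteq> {(\<lambda>_. 0, {})}"
  by (auto simp: supp_def alg_const_def)

lemma alg_mul_eq_sum:
  assumes "finite A" "finite B" "supp f \<subseteq> A" "supp g \<subseteq> B"
  shows "alg_mul f g \<mu> = (\<Sum>\<alpha>\<in>A. \<Sum>\<beta>\<in>B.
      of_bool (snd \<alpha> \<inter> snd \<beta> = {} \<and> mono_mul \<alpha> \<beta> = \<mu>) * theta_sign (snd \<alpha>) (snd \<beta>) * f \<alpha> * g \<beta>)"
proof -
  define F where "F = (\<lambda>\<alpha> \<beta>. of_bool (snd \<alpha> \<inter> snd \<beta> = {} \<and> mono_mul \<alpha> \<beta> = \<mu>) *
      theta_sign (snd \<alpha>) (snd \<beta>) * f \<alpha> * g \<beta>)"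
  have "alg_mul f g \<mu> = (\<Sum>\<alpha>\<in>supp f. \<Sum>\<beta>\<in>supp g. F \<alpha> \<beta>)"
    unfolding alg_mul_def F_def by (intro sum.cong) auto
  also have "\<dots> = (\<Sum>\<alpha>\<in>A. \<Sum>\<beta>\<in>supp g. F \<alpha> \<beta>)"
    by (rule sum.mono_neutral_left) (use assms in \<open>auto simp: F_def supp_iff intro!: sum.neutral\<close>)
  also have "\<dots> = (\<Sum>\<alpha>\<in>A. \<Sum>\<beta>\<in>B. F \<alpha> \<beta>)"
    by (rule sum.cong[OF refl], rule sum.mono_neutral_left)
      (use assms finite_subset in \<open>auto simp: F_def supp_iff\<close>)
  finally show ?thesis by (simp add: F_def)
qed

lemma alg_act_eq_sum:
  assumes "finite A" "supp f \<subseteq> A"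
  shows "alg_act \<sigma> f \<mu> = (\<Sum>\<alpha>\<in>A. of_bool (mono_act \<sigma> \<alpha> = \<mu>) * perm_sign \<sigma> (snd \<alpha>) * f \<alpha>)"
proof -
  have "alg_act \<sigma> f \<mu> = (\<Sum>\<alpha>\<in>supp f. of_bool (mono_act \<sigma> \<alpha> = \<mu>) * perm_sign \<sigma> (snd \<alpha>) * f \<alpha>)"
    unfolding alg_act_def by (intro sum.cong) auto
  also have "\<dots> = (\<Sum>\<alpha>\<in>A. of_bool (mono_act \<sigma> \<alpha> = \<mu>) * perm_sign \<sigma> (snd \<alpha>) * f \<alpha>)"
    by (rule sum.mono_neutral_left) (use assms in \<open>auto simp: supp_iff\<close>)
  finally show ?thesis .
qed

lemma supp_alg_mul: "supp (alg_mul f g) \<subseteq> (\<lambda>(\<alpha>, \<beta>). mono_mul \<alpha> \<beta>) ` (supp f \<times> supp g)"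
proof
  fix \<mu> assume "\<mu> \<in> supp (alg_mul f g)"
  then have "alg_mul f g \<mu> \<noteq> 0" by (simp add: supp_iff)
  then obtain \<alpha> where "\<alpha> \<in> supp f" and "(\<Sum>\<beta>\<in>supp g. if snd \<alpha> \<inter> snd \<beta> = {} \<and> mono_mul \<alpha> \<beta> = \<mu>
      then theta_sign (snd \<alpha>) (snd \<beta>) * f \<alpha> * g \<beta> else 0) \<noteq> 0"
    unfolding alg_mul_def by (rule sum.not_neutral_contains_not_neutral)
  moreover from this(2) obtain \<beta> where "\<beta> \<in> supp g" "mono_mul \<alpha> \<beta> = \<mu>"
    by (rule sum.not_neutral_contains_not_neutral) (auto split: if_splits)
  ultimately show "\<mu> \<in> (\<lambda>(\<alpha>, \<beta>). mono_mul \<alpha> \<beta>) ` (supp f \<times> supp g)" by force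
qed

lemma supp_alg_act: "supp (alg_act \<sigma> f) \<subseteq> mono_act \<sigma> ` supp f"
proof
  fix \<mu> assume "\<mu> \<in> supp (alg_act \<sigma> f)"
  then have "alg_act \<sigma> f \<mu> \<noteq> 0" by (simp add: supp_iff)
  then obtain \<alpha> where "\<alpha> \<in> supp f" "mono_act \<sigma> \<alpha> = \<mu>"
    unfolding alg_act_def by (rule sum.not_neutral_contains_not_neutral) (auto split: if_splits)
  then show "\<mu> \<in> mono_act \<sigma> ` supp f" by force
qed

lemma finite_supp_plus [intro]: "finite (supp f) \<Longrightarrow> finite (supp g) \<Longrightarrow> finite (supp (f + g))"
  by (meson finite_UnI finite_subset supp_plus)

lemma finite_supp_smul [simp, intro]: "finite (supp f) \<Longrightarrow> finite (supp (smul c f))"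
  by (meson finite_subset supp_smul)

lemma finite_supp_monomial [simp, intro]: "finite (supp (monomial \<mu>))"
  by (simp add: supp_monomial)

lemma finite_supp_sum [intro]: "(\<And>i. i \<in> I \<Longrightarrow> finite (supp (F i))) \<Longrightarrow> finite (supp (sum F I))"
proof (induction I rule: infinite_finite_induct)
  case (insert i I)
  then show ?case
    unfolding sum.insert[OF insert(1,2)] by (intro finite_supp_plus) auto
qed (auto simp: supp_def)

lemma finite_supp_alg_mul [intro]:
  "finite (supp f) \<Longrightarrow> finite (supp g) \<Longrightarrow> finite (supp (alg_mul f g))"
  by (rule finite_subset[OF supp_alg_mul]) auto

lemma finite_supp_alg_act [intro]: "finite (supp f) \<Longrightarrow> finite (supp (alg_act \<sigma> f))"
  by (meson finite_imageI finite_subset supp_alg_act)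

lemma alg_mul_plus_left:
  assumes "finite (supp f1)" "finite (supp f2)" "finite (supp g)"
  shows "alg_mul (f1 + f2) g = alg_mul f1 g + alg_mul f2 g"
proof
  fix \<mu>
  let ?A = "supp f1 \<union> supp f2"
  have "finite ?A" using assms by auto
  then show "alg_mul (f1 + f2) g \<mu> = (alg_mul f1 g + alg_mul f2 g) \<mu>"
    using supp_plus[of f1 f2]
    by (simp add: alg_mul_eq_sum[of ?A "supp g"] assms sum.distrib[symmetric] algebra_simps)
qed

lemma alg_mul_plus_right:
  assumes "finite (supp f)" "finite (supp g1)" "finite (supp g2)"
  shows "alg_mul f (g1 + g2) = alg_mul f g1 + alg_mul f g2"
proof
  fix \<mu>
  let ?B = "supp g1 \<union> supp g2"
  have "finite ?B" using assms by auto
  then show "alg_mul f (g1 + g2) \<mu> = (alg_mul f g1 + alg_mul f g2) \<mu>"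
    using supp_plus[of g1 g2]
    by (simp add: alg_mul_eq_sum[of "supp f" ?B] assms sum.distrib[symmetric] algebra_simps)
qed

lemma alg_mul_smul_left:
  assumes "finite (supp f)" "finite (supp g)"
  shows "alg_mul (smul c f) g = smul c (alg_mul f g)"
proof
  fix \<mu>
  show "alg_mul (smul c f) g \<mu> = smul c (alg_mul f g) \<mu>"
    unfolding alg_mul_eq_sum[OF assms supp_smul order.refl] alg_mul_eq_sum[OF assms order.refl order.refl]
    by (simp add: smul_def sum_distrib_left algebra_simps)
qed

lemma alg_mul_smul_right:
  assumes "finite (supp f)" "finite (supp g)"
  shows "alg_mul f (smul c g) = smul c (alg_mul f g)"
proof
  fix \<mu>
  show "alg_mul f (smul c g) \<mu> = smul c (alg_mul f g) \<mu>"
    unfolding alg_mul_eq_sum[OF assms order.refl supp_smul] alg_mul_eq_sum[OF assms order.refl order.refl]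
    by (simp add: smul_def sum_distrib_left algebra_simps)
qed

lemma alg_mul_zero_left: "alg_mul 0 g = 0"
  by (auto simp: alg_mul_def supp_def)

lemma alg_mul_zero_right: "alg_mul f 0 = 0"
  by (auto simp: alg_mul_def supp_def)

lemma alg_mul_sum_left:
  assumes "\<And>i. i \<in> I \<Longrightarrow> finite (supp (F i))" "finite (supp g)"
  shows "alg_mul (sum F I) g = (\<Sum>i\<in>I. alg_mul (F i) g)"
  using assms
  by (induction I rule: infinite_finite_induct) (auto simp: alg_mul_zero_left alg_mul_plus_left finite_supp_sum)

lemma alg_mul_sum_right:
  assumes "\<And>i. i \<in> I \<Longrightarrow> finite (supp (F i))" "finite (supp f)"
  shows "alg_mul f (sum F I) = (\<Sum>i\<in>I. alg_mul f (F i))"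
  using assms
  by (induction I rule: infinite_finite_induct) (auto simp: alg_mul_zero_right alg_mul_plus_right finite_supp_sum)

lemma alg_mul_sum_sum:
  assumes "finite A" "finite B" "\<And>\<alpha>. finite (supp (P \<alpha>))" "\<And>\<beta>. finite (supp (Q \<beta>))"
  shows "alg_mul (\<Sum>\<alpha>\<in>A. smul (a \<alpha>) (P \<alpha>)) (\<Sum>\<beta>\<in>B. smul (b \<beta>) (Q \<beta>)) =
     (\<Sum>\<alpha>\<in>A. \<Sum>\<beta>\<in>B. smul (a \<alpha> * b \<beta>) (alg_mul (P \<alpha>) (Q \<beta>)))"
  using assms
  by (simp add: alg_mul_sum_left alg_mul_sum_right alg_mul_smul_left alg_mul_smul_right
      finite_supp_sum finite_supp_smul smul_sum) (subst sum.swap, simp add: smul_smul mult.commute)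

lemma alg_act_plus:
  assumes "finite (supp f1)" "finite (supp f2)"
  shows "alg_act \<sigma> (f1 + f2) = alg_act \<sigma> f1 + alg_act \<sigma> f2"
proof
  fix \<mu>
  let ?A = "supp f1 \<union> supp f2"
  have "finite ?A" using assms by auto
  then show "alg_act \<sigma> (f1 + f2) \<mu> = (alg_act \<sigma> f1 + alg_act \<sigma> f2) \<mu>"
    using supp_plus[of f1 f2]
    by (simp add: alg_act_eq_sum[of ?A] sum.distrib[symmetric] algebra_simps)
qed

lemma alg_act_smul:
  assumes "finite (supp f)"
  shows "alg_act \<sigma> (smul c f) = smul c (alg_act \<sigma> f)"
proof
  fix \<mu>
  show "alg_act \<sigma> (smul c f) \<mu> = smul c (alg_act \<sigma> f) \<mu>"
    unfolding alg_act_eq_sum[OF assms supp_smul] alg_act_eq_sum[OF assms order.refl]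
    by (simp add: smul_def sum_distrib_left algebra_simps)
qed

lemma alg_act_zero: "alg_act \<sigma> 0 = 0"
  by (auto simp: alg_act_def supp_def)

lemma alg_act_sum:
  assumes "\<And>i. i \<in> I \<Longrightarrow> finite (supp (F i))"
  shows "alg_act \<sigma> (sum F I) = (\<Sum>i\<in>I. alg_act \<sigma> (F i))"
  using assms by (induction I rule: infinite_finite_induct) (auto simp: alg_act_zero alg_act_plus finite_supp_sum)

lemma alg_mul_smul_monomial:
  "alg_mul (smul a (monomial \<alpha>)) (smul b (monomial \<beta>)) =
    (if snd \<alpha> \<inter> snd \<beta> = {}
     then smul (a * b * theta_sign (snd \<alpha>) (snd \<beta>)) (monomial (mono_mul \<alpha> \<beta>)) else 0)"
proof
  fix \<mu>
  have supp: "supp (smul a (monomial \<alpha>)) \<subseteq> {\<alpha>}" "supp (smul b (monomial \<beta>)) \<subseteq> {\<beta>}"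
    using supp_smul supp_monomial by metis+
  show "alg_mul (smul a (monomial \<alpha>)) (smul b (monomial \<beta>)) \<mu> = (if snd \<alpha> \<inter> snd \<beta> = {}
      then smul (a * b * theta_sign (snd \<alpha>) (snd \<beta>)) (monomial (mono_mul \<alpha> \<beta>)) else 0) \<mu>"
    unfolding alg_mul_eq_sum[OF finite.insertI[OF finite.emptyI] finite.insertI[OF finite.emptyI] supp]
    by (simp add: smul_def monomial_def)
qed

lemma alg_act_smul_monomial:
  "alg_act \<sigma> (smul a (monomial \<alpha>)) = smul (a * perm_sign \<sigma> (snd \<alpha>)) (monomial (mono_act \<sigma> \<alpha>))"
proof
  fix \<mu>
  have supp: "supp (smul a (monomial \<alpha>)) \<subseteq> {\<alpha>}"
    using supp_smul supp_monomial by metis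
  show "alg_act \<sigma> (smul a (monomial \<alpha>)) \<mu> = smul (a * perm_sign \<sigma> (snd \<alpha>)) (monomial (mono_act \<sigma> \<alpha>)) \<mu>"
    unfolding alg_act_eq_sum[OF finite.insertI[OF finite.emptyI] supp]
    by (simp add: smul_def monomial_def)
qed

lemma monomial_expansion:
  assumes "finite (supp f)"
  shows "f = (\<Sum>\<alpha>\<in>supp f. smul (f \<alpha>) (monomial \<alpha>))"
proof
  fix \<mu>
  have "(\<Sum>\<alpha>\<in>supp f. smul (f \<alpha>) (monomial \<alpha>)) \<mu> = (\<Sum>\<alpha>\<in>supp f. if \<mu> = \<alpha> then f \<alpha> else 0)"
    unfolding sum_fun_apply by (intro sum.cong) (auto simp: smul_def monomial_def)
  then show "f \<mu> = (\<Sum>\<alpha>\<in>supp f. smul (f \<alpha>) (monomial \<alpha>)) \<mu>"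
    using assms by (simp add: sum.delta supp_iff)
qed

lemma alg_const_eq_smul: "alg_const c = smul c (monomial (\<lambda>_. 0, {}))"
  by (auto simp: alg_const_def smul_def monomial_def)

lemma alg_mul_const:
  assumes "finite (supp f)"
  shows "alg_mul (alg_const c) f = smul c f"
proof
  fix \<mu>
  have unit: "mono_mul (\<lambda>_. 0, {}) \<beta> = \<beta>" for \<beta> :: mono
    by (simp add: mono_mul_def)
  have "alg_mul (alg_const c) f \<mu> = (\<Sum>\<beta>\<in>supp f. of_bool (\<beta> = \<mu>) * (c * f \<beta>))"
    unfolding alg_mul_eq_sum[OF finite.insertI[OF finite.emptyI] assms supp_alg_const order.refl]
    by (simp add: unit theta_sign_def alg_const_def mult.assoc)
  also have "\<dots> = (\<Sum>\<beta>\<in>supp f. if \<beta> = \<mu> then c * f \<beta> else 0)"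
    by (intro sum.cong) auto
  also have "\<dots> = smul c f \<mu>"
    using assms by (simp add: smul_def supp_iff)
  finally show "alg_mul (alg_const c) f \<mu> = smul c f \<mu>" .
qed

section \<open>Inversions\<close>

fun inversions :: "'a::linorder list \<Rightarrow> nat" where
  "inversions [] = 0"
| "inversions (a # w) = card {b \<in> set w. b < a} + inversions w"

lemma inversions_sorted: "sorted w \<Longrightarrow> inversions w = 0"
  by (induction w) (auto simp: not_less)

lemma inversions_append:
  assumes "distinct (u @ v)"
  shows "inversions (u @ v) = inversions u + inversions v + card {(a, b). a \<in> set u \<and> b \<in> set v \<and> b < a}"
  using assms
proof (induction u)
  case (Cons a u)
  let ?C = "\<lambda>u. {(a, b). a \<in> set u \<and> b \<in> set v \<and> b < a}"
  have a: "a \<notin> set u" "a \<notin> set v" using Cons.prems by auto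
  have "{b \<in> set (u @ v). b < a} = {b \<in> set u. b < a} \<union> {b \<in> set v. b < a}" by auto
  then have c1: "card {b \<in> set (u @ v). b < a} = card {b \<in> set u. b < a} + card {b \<in> set v. b < a}"
    using Cons.prems by (simp add: card_Un_disjoint disjoint_iff)
  have "?C (a # u) = Pair a ` {b \<in> set v. b < a} \<union> ?C u" by auto
  moreover have "Pair a ` {b \<in> set v. b < a} \<inter> ?C u = {}" using a by auto
  moreover have "finite (?C u)"
    by (rule finite_subset[of _ "set u \<times> set v"]) auto
  ultimately have c2: "card (?C (a # u)) = card {b \<in> set v. b < a} + card (?C u)"
    by (simp add: card_Un_disjoint card_image inj_on_def)
  show ?case using c1 c2 Cons by simp
qed simp

lemma inversions_map_Pair: "inversions (map (Pair r) w) = inversions w"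
proof (induction w)
  case (Cons a w)
  have "{y \<in> set (map (Pair r) w). y < (r, a)} = Pair r ` {b \<in> set w. b < a}" by auto
  then have "card {y \<in> set (map (Pair r) w). y < (r, a)} = card {b \<in> set w. b < a}"
    by (simp add: card_image inj_on_def)
  then show ?case using Cons by simp
qed simp

lemma card_pairs_descending_swap:
  fixes A B :: "'a::linorder set"
  assumes "A \<inter> B = {}" "finite A" "finite B"
  shows "card {(a, b). a \<in> A \<and> b \<in> B \<and> b < a} + card {(b, a). b \<in> B \<and> a \<in> A \<and> a < b}
    = card A * card B"
proof -
  let ?X = "{(a, b). a \<in> A \<and> b \<in> B \<and> b < a}"
  let ?Y = "{(a, b). a \<in> A \<and> b \<in> B \<and> a < b}"
  have "{(b, a). b \<in> B \<and> a \<in> A \<and> a < b} = prod.swap ` ?Y" by auto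
  then have "card {(b, a). b \<in> B \<and> a \<in> A \<and> a < b} = card ?Y"
    by (simp add: card_image)
  moreover have "?X \<union> ?Y = A \<times> B" using assms(1) by (auto simp: neq_iff)
  moreover have "finite ?X" "finite ?Y" by (rule finite_subset[of _ "A \<times> B"]; use assms in auto)+
  then have "card (?X \<union> ?Y) = card ?X + card ?Y" by (rule card_Un_disjoint) auto
  ultimately show ?thesis by (simp add: card_cartesian_product)
qed

lemma card_filter_split:
  assumes "finite W"
  shows "card {b \<in> W. P b} = card {b \<in> W. P b \<and> Q b} + card {b \<in> W. P b \<and> \<not> Q b}"
proof -
  have "{b \<in> W. P b} = {b \<in> W. P b \<and> Q b} \<union> {b \<in> W. P b \<and> \<not> Q b}" by auto
  then show ?thesis using assms by (simp add: card_Un_disjoint disjoint_iff)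
qed

lemma even_card_order_changes:
  fixes t :: "'a::linorder \<Rightarrow> 'b::linorder"
  assumes "finite W" "a \<notin> W" "inj_on t (insert a W)"
  shows "even (card {b \<in> W. t b < t a} + card {b \<in> W. b < a} +
    card {b \<in> W. a < b \<and> t b < t a} + card {b \<in> W. b < a \<and> t a < t b})"
proof -
  have ne: "b \<noteq> a" "t b \<noteq> t a" "t a \<noteq> t b" if "b \<in> W" for b
    using assms(2) that inj_onD[OF assms(3), of b a] by auto
  have "{b \<in> W. t b < t a \<and> \<not> b < a} = {b \<in> W. a < b \<and> t b < t a}"
       "{b \<in> W. b < a \<and> \<not> t b < t a} = {b \<in> W. b < a \<and> t a < t b}"
    using ne by (auto simp: not_less order.order_iff_strict)
  moreover have "{b \<in> W. t b < t a \<and> b < a} = {b \<in> W. b < a \<and> t b < t a}" by auto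
  ultimately have "card {b \<in> W. t b < t a} + card {b \<in> W. b < a} +
      card {b \<in> W. a < b \<and> t b < t a} + card {b \<in> W. b < a \<and> t a < t b} =
      2 * (card {b \<in> W. b < a \<and> t b < t a} + card {b \<in> W. a < b \<and> t b < t a} +
        card {b \<in> W. b < a \<and> t a < t b})"
    using card_filter_split[OF assms(1), of "\<lambda>b. t b < t a" "\<lambda>b. b < a"]
      card_filter_split[OF assms(1), of "\<lambda>b. b < a" "\<lambda>b. t b < t a"]
    by simp
  then show ?thesis by simp
qed

lemma card_descents_insert:
  fixes t :: "'a::linorder \<Rightarrow> 'b::linorder"
  assumes "finite W" "a \<notin> W"
  shows "card {(x, y). x \<in> insert a W \<and> y \<in> insert a W \<and> x < y \<and> t y < t x} =
    card {(x, y). x \<in> W \<and> y \<in> W \<and> x < y \<and> t y < t x} +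
    card {b \<in> W. a < b \<and> t b < t a} + card {b \<in> W. b < a \<and> t a < t b}"
proof -
  let ?P = "{(x, y). x \<in> W \<and> y \<in> W \<and> x < y \<and> t y < t x}"
  let ?R = "Pair a ` {b \<in> W. a < b \<and> t b < t a}"
  let ?L = "(\<lambda>b. (b, a)) ` {b \<in> W. b < a \<and> t a < t b}"
  have "{(x, y). x \<in> insert a W \<and> y \<in> insert a W \<and> x < y \<and> t y < t x} = ?P \<union> (?R \<union> ?L)"
    by auto
  moreover have "finite ?P" by (rule finite_subset[of _ "W \<times> W"]) (use assms in auto)
  moreover have "?P \<inter> (?R \<union> ?L) = {}" "?R \<inter> ?L = {}" using assms(2) by auto
  moreover have "card ?R = card {b \<in> W. a < b \<and> t b < t a}"
    "card ?L = card {b \<in> W. b < a \<and> t a < t b}"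
    by (simp_all add: card_image inj_on_def)
  ultimately show ?thesis using assms(1) by (simp add: card_Un_disjoint)
qed

lemma neg_one_power_eq_if_even_add:
  assumes "even (a + b)"
  shows "(-1::'c::comm_ring_1) ^ a = (-1) ^ b"
proof -
  have "(-1::'c) ^ a = (-1) ^ a * ((-1) ^ b * (-1) ^ b)"
    by (simp add: power_add[symmetric])
  also have "\<dots> = (-1) ^ (a + b) * (-1) ^ b"
    by (simp add: power_add mult.assoc)
  finally show ?thesis using assms by simp
qed

lemma sign_inversions_map:
  fixes t :: "'a::linorder \<Rightarrow> 'b::linorder"
  assumes "inj_on t (set w)" "distinct w"
  shows "(-1::'c::comm_ring_1) ^ inversions (map t w) =
    (-1) ^ inversions w * (-1) ^ card {(a, b). a \<in> set w \<and> b \<in> set w \<and> a < b \<and> t b < t a}"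
  using assms
proof (induction w)
  case (Cons a w)
  let ?W = "set w"
  let ?P = "\<lambda>A. {(x, y). x \<in> A \<and> y \<in> A \<and> x < y \<and> t y < t x}"
  define c1 where "c1 = card {b \<in> ?W. t b < t a}"
  define c2 where "c2 = card {b \<in> ?W. b < a}"
  define c3 where "c3 = card {b \<in> ?W. a < b \<and> t b < t a}"
  define c4 where "c4 = card {b \<in> ?W. b < a \<and> t a < t b}"
  have aW: "a \<notin> ?W" "distinct w" "inj_on t ?W" using Cons.prems by auto
  have "{y \<in> set (map t w). y < t a} = t ` {b \<in> ?W. t b < t a}" by auto
  moreover have "card (t ` {b \<in> ?W. t b < t a}) = c1"
    unfolding c1_def by (rule card_image, rule inj_on_subset[OF aW(3)]) auto
  ultimately have inv_map: "inversions (map t (a # w)) = c1 + inversions (map t w)"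
    by simp
  have "even (c1 + c2 + c3 + c4)"
    unfolding c1_def c2_def c3_def c4_def by (rule even_card_order_changes) (use Cons.prems in auto)
  then have "(-1::'c) ^ c1 = (-1) ^ (c2 + c3 + c4)"
    by (intro neg_one_power_eq_if_even_add) (simp only: add.assoc)
  then have sign: "(-1::'c) ^ c1 = (-1) ^ c2 * (-1) ^ c3 * (-1) ^ c4"
    by (simp only: power_add)
  have "(-1::'c) ^ inversions (map t (a # w)) = (-1) ^ c1 * ((-1) ^ inversions w * (-1) ^ card (?P ?W))"
    by (simp only: inv_map power_add Cons.IH[OF aW(3,2)])
  also have "\<dots> = ((-1) ^ c2 * (-1) ^ inversions w) * ((-1) ^ card (?P ?W) * (-1) ^ c3 * (-1) ^ c4)"
    by (simp only: sign mult_ac)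
  also have "\<dots> = (-1) ^ inversions (a # w) * (-1) ^ card (?P (insert a ?W))"
    by (simp only: inversions.simps c2_def c3_def c4_def card_descents_insert[OF List.finite_set aW(1)]
        power_add)
  finally show ?case by simp
qed simp

section \<open>Ordered products of odd variables\<close>

definition word_sign :: "(nat \<times> nat) list \<Rightarrow> complex" where
  "word_sign w = (-1) ^ inversions w"

text \<open>\<open>word_monomial e w\<close> is \<open>x\<^sup>e \<theta>\<^bsub>w\<^sub>1\<^esub> \<cdots> \<theta>\<^bsub>w\<^sub>k\<^esub>\<close>, the odd variables multiplied in the order of the word \<open>w\<close>.\<close>

definition word_monomial :: "((nat \<times> nat) \<Rightarrow> nat) \<Rightarrow> (nat \<times> nat) list \<Rightarrow> salg" where
  "word_monomial e w = (if distinct w then smul (word_sign w) (monomial (e, set w)) else 0)"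

lemma finite_supp_word_monomial [simp, intro]: "finite (supp (word_monomial e w))"
  by (auto simp: word_monomial_def)

lemma monomial_eq_word_monomial: "finite A \<Longrightarrow> monomial (e, A) = word_monomial e (sorted_list_of_set A)"
  by (simp add: word_monomial_def word_sign_def inversions_sorted)

lemma word_sign_append:
  assumes "distinct (u @ v)"
  shows "word_sign (u @ v) = word_sign u * word_sign v * theta_sign (set u) (set v)"
  by (simp add: word_sign_def theta_sign_def inversions_append[OF assms] power_add)

lemma theta_sign_square: "theta_sign A B * theta_sign A B = 1"
  unfolding theta_sign_def power_mult_distrib[symmetric] by simp

text \<open>Moving a block of \<open>card A\<close> odd variables past a block of \<open>card B\<close> ones reverses every pair between them.\<close>

lemma theta_sign_swap:
  assumes "A \<inter> B = {}" "finite A" "finite B"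
  shows "theta_sign A B * theta_sign B A = (-1) ^ (card A * card B)"
  unfolding theta_sign_def power_add[symmetric] card_pairs_descending_swap[OF assms] ..

lemma word_sign_swap:
  assumes "distinct (v @ w @ z)"
  shows "word_sign (v @ w @ z) = (-1) ^ (length v * length w) * word_sign (w @ v @ z)"
proof -
  let ?t = theta_sign
  have d: "distinct (v @ w)" "distinct (w @ v)" "distinct ((v @ w) @ z)" "distinct ((w @ v) @ z)"
    using assms by auto
  have "set v \<inter> set w = {}" using assms by auto
  then have swap: "?t (set v) (set w) * ?t (set w) (set v) = (-1) ^ (length v * length w)"
    using theta_sign_swap[of "set v" "set w"] assms by (simp add: distinct_card)
  have "?t (set v) (set w) = ?t (set v) (set w) * (?t (set w) (set v) * ?t (set w) (set v))"
    by (simp add: theta_sign_square)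
  also have "\<dots> = (-1) ^ (length v * length w) * ?t (set w) (set v)"
    unfolding mult.assoc[symmetric] swap ..
  finally have vw: "?t (set v) (set w) = (-1) ^ (length v * length w) * ?t (set w) (set v)" .
  have "word_sign ((v @ w) @ z) = word_sign v * word_sign w * ?t (set v) (set w) * word_sign z *
      ?t (set (v @ w)) (set z)"
    unfolding word_sign_append[OF d(3)] word_sign_append[OF d(1)] ..
  moreover have "word_sign ((w @ v) @ z) = word_sign w * word_sign v * ?t (set w) (set v) * word_sign z *
      ?t (set (w @ v)) (set z)"
    unfolding word_sign_append[OF d(4)] word_sign_append[OF d(2)] ..
  moreover have "set (w @ v) = set (v @ w)" by auto
  ultimately show ?thesis unfolding vw append_assoc by (simp only: mult_ac)
qed

lemma word_monomial_swap:
  "word_monomial e (v @ w @ z) = smul ((-1) ^ (length v * length w)) (word_monomial e (w @ v @ z))"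
proof (cases "distinct (v @ w @ z)")
  case True
  moreover have "distinct (w @ v @ z)" "set (v @ w @ z) = set (w @ v @ z)" using True by auto
  ultimately show ?thesis by (simp only: word_monomial_def if_True word_sign_swap[OF True] smul_smul)
qed (auto simp: word_monomial_def)

lemma alg_mul_word_monomial:
  "alg_mul (word_monomial e1 w1) (word_monomial e2 w2) = word_monomial (\<lambda>p. e1 p + e2 p) (w1 @ w2)"
proof (cases "distinct w1 \<and> distinct w2")
  case True
  have "mono_mul (e1, set w1) (e2, set w2) = (\<lambda>p. e1 p + e2 p, set (w1 @ w2))"
    by (simp add: mono_mul_def)
  moreover have "distinct (w1 @ w2) \<longleftrightarrow> set w1 \<inter> set w2 = {}" using True by simp
  ultimately show ?thesis
    using True by (simp add: word_monomial_def alg_mul_smul_monomial word_sign_append)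
qed (auto simp: word_monomial_def alg_mul_zero_left alg_mul_zero_right)

definition row_perm :: "(nat \<Rightarrow> nat) \<Rightarrow> nat \<times> nat \<Rightarrow> nat \<times> nat" where
  "row_perm \<sigma> = (\<lambda>(r, i). (\<sigma> r, i))"

definition exp_perm :: "(nat \<Rightarrow> nat) \<Rightarrow> ((nat \<times> nat) \<Rightarrow> nat) \<Rightarrow> ((nat \<times> nat) \<Rightarrow> nat)" where
  "exp_perm \<sigma> e = (\<lambda>(r, k). e (inv \<sigma> r, k))"

lemma mono_act_eq: "mono_act \<sigma> (e, A) = (exp_perm \<sigma> e, row_perm \<sigma> ` A)"
  by (simp add: mono_act_def exp_perm_def row_perm_def)

lemma row_perm_apply: "row_perm \<sigma> b = (\<sigma> (fst b), snd b)"
  by (cases b) (simp add: row_perm_def)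

lemma inj_row_perm: "inj \<sigma> \<Longrightarrow> inj (row_perm \<sigma>)"
  by (auto simp: inj_def row_perm_apply prod_eq_iff)

lemma exp_perm_add: "exp_perm \<sigma> (\<lambda>p. e1 p + e2 p) = (\<lambda>p. exp_perm \<sigma> e1 p + exp_perm \<sigma> e2 p)"
  by (auto simp: exp_perm_def)

lemma word_sign_map_row_perm:
  assumes "inj \<sigma>" "distinct w"
  shows "word_sign (map (row_perm \<sigma>) w) = word_sign w * perm_sign \<sigma> (set w)"
  using sign_inversions_map[OF inj_on_subset[OF inj_row_perm[OF assms(1)] subset_UNIV] assms(2)]
  by (simp add: word_sign_def perm_sign_def row_perm_apply)

lemma alg_act_word_monomial:
  assumes "inj \<sigma>"
  shows "alg_act \<sigma> (word_monomial e w) = word_monomial (exp_perm \<sigma> e) (map (row_perm \<sigma>) w)"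
proof -
  have "distinct (map (row_perm \<sigma>) w) \<longleftrightarrow> distinct w"
    using inj_row_perm[OF assms] by (auto simp: distinct_map intro: inj_on_subset)
  then show ?thesis
    by (simp add: word_monomial_def alg_act_smul_monomial mono_act_eq
        word_sign_map_row_perm[OF assms] alg_act_zero)
qed

lemma alg_act_alg_mul_word_monomial:
  assumes "inj \<sigma>"
  shows "alg_act \<sigma> (alg_mul (word_monomial e1 w1) (word_monomial e2 w2)) =
         alg_mul (alg_act \<sigma> (word_monomial e1 w1)) (alg_act \<sigma> (word_monomial e2 w2))"
  unfolding alg_mul_word_monomial alg_act_word_monomial[OF assms] exp_perm_add map_append ..

text \<open>By bilinearity, multiplicativity of the action reduces to ordered products.\<close>

lemma alg_act_alg_mul:
  assumes "inj \<sigma>" "finite (supp f)" "finite (supp g)"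
    and "\<forall>\<alpha>\<in>supp f. finite (snd \<alpha>)" "\<forall>\<beta>\<in>supp g. finite (snd \<beta>)"
  shows "alg_act \<sigma> (alg_mul f g) = alg_mul (alg_act \<sigma> f) (alg_act \<sigma> g)"
proof -
  define P where "P = (\<lambda>\<alpha>. word_monomial (fst \<alpha>) (sorted_list_of_set (snd \<alpha>)))"
  have P_fin: "finite (supp (P \<alpha>))" "finite (supp (alg_act \<sigma> (P \<alpha>)))" for \<alpha>
    by (auto simp: P_def)
  have expand: "h = (\<Sum>\<alpha>\<in>supp h. smul (h \<alpha>) (P \<alpha>))"
    if "finite (supp h)" "\<forall>\<alpha>\<in>supp h. finite (snd \<alpha>)" for h
    using monomial_expansion[OF that(1)] that(2)
    by (simp add: P_def monomial_eq_word_monomial[symmetric] cong: sum.cong)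
  have act_mul: "alg_act \<sigma> (alg_mul (P \<alpha>) (P \<beta>)) = alg_mul (alg_act \<sigma> (P \<alpha>)) (alg_act \<sigma> (P \<beta>))"
    for \<alpha> \<beta>
    unfolding P_def by (rule alg_act_alg_mul_word_monomial[OF assms(1)])
  have act: "alg_act \<sigma> h = (\<Sum>\<alpha>\<in>supp h. smul (h \<alpha>) (alg_act \<sigma> (P \<alpha>)))"
    if "finite (supp h)" "\<forall>\<alpha>\<in>supp h. finite (snd \<alpha>)" for h
    by (subst expand[OF that]) (simp add: alg_act_sum alg_act_smul P_fin finite_supp_smul)
  have "alg_act \<sigma> (alg_mul f g) =
      alg_act \<sigma> (\<Sum>\<alpha>\<in>supp f. \<Sum>\<beta>\<in>supp g. smul (f \<alpha> * g \<beta>) (alg_mul (P \<alpha>) (P \<beta>)))"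
    by (subst expand[OF assms(2,4)], subst expand[OF assms(3,5)], subst alg_mul_sum_sum)
      (use assms P_fin in auto)
  also have "\<dots> = (\<Sum>\<alpha>\<in>supp f. \<Sum>\<beta>\<in>supp g. smul (f \<alpha> * g \<beta>) (alg_act \<sigma> (alg_mul (P \<alpha>) (P \<beta>))))"
    by (simp add: alg_act_sum alg_act_smul P_fin finite_supp_smul finite_supp_sum finite_supp_alg_mul)
  also have "\<dots> = alg_mul (alg_act \<sigma> f) (alg_act \<sigma> g)"
    unfolding act[OF assms(2,4)] act[OF assms(3,5)]
    by (simp add: alg_mul_sum_sum P_fin act_mul assms)
  finally show ?thesis .
qed

section \<open>Augmented power sums\<close>

text \<open>A word over the letters \<open>Inl k\<close> (for \<open>x\<^sub>k\<close>) and \<open>Inr i\<close> (for \<open>\<theta>\<^sub>i\<close>) placed in row \<open>r\<close>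
  stands for the ordered product of the \<open>x\<^bsub>r k\<^esub>\<close> and \<open>\<theta>\<^bsub>r i\<^esub>\<close>.\<close>

fun barred :: "(nat + nat) list \<Rightarrow> nat list" where
  "barred [] = []"
| "barred (Inl k # L) = barred L"
| "barred (Inr i # L) = i # barred L"

definition row_exp :: "nat \<Rightarrow> (nat + nat) list \<Rightarrow> (nat \<times> nat \<Rightarrow> nat)" where
  "row_exp r L = (\<lambda>(r', k). if r' = r then count (mset L) (Inl k) else 0)"

definition row_thetas :: "nat \<Rightarrow> (nat + nat) list \<Rightarrow> (nat \<times> nat) list" where
  "row_thetas r L = map (Pair r) (barred L)"

fun rows_exp :: "nat list \<Rightarrow> (nat + nat) list list \<Rightarrow> (nat \<times> nat \<Rightarrow> nat)" where
  "rows_exp (r # rs) (T # Ts) = (\<lambda>p. row_exp r T p + rows_exp rs Ts p)"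
| "rows_exp _ _ = (\<lambda>_. 0)"

fun rows_thetas :: "nat list \<Rightarrow> (nat + nat) list list \<Rightarrow> (nat \<times> nat) list" where
  "rows_thetas (r # rs) (T # Ts) = row_thetas r T @ rows_thetas rs Ts"
| "rows_thetas _ _ = []"

definition placement :: "nat list \<Rightarrow> (nat + nat) list list \<Rightarrow> salg" where
  "placement rs Ts = word_monomial (rows_exp rs Ts) (rows_thetas rs Ts)"

definition row_choices :: "nat \<Rightarrow> nat \<Rightarrow> nat list set" where
  "row_choices n k = {rs. length rs = k \<and> distinct rs \<and> set rs \<subseteq> {1..n}}"

definition aug_psum :: "nat \<Rightarrow> (nat + nat) list list \<Rightarrow> salg" where
  "aug_psum n Ts = (\<Sum>rs\<in>row_choices n (length Ts). placement rs Ts)"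

definition word_psum :: "nat \<Rightarrow> (nat + nat) list \<Rightarrow> salg" where
  "word_psum n L = aug_psum n [L]"

definition merge_sign :: "(nat + nat) list \<Rightarrow> (nat + nat) list list \<Rightarrow> nat \<Rightarrow> complex" where
  "merge_sign T Ts j = (-1) ^ (length (barred T) * length (barred (concat (take j Ts))))"

lemma merge_sign_square: "merge_sign T Ts j * merge_sign T Ts j = 1"
  unfolding merge_sign_def power_mult_distrib[symmetric] by simp

lemma finite_row_choices [simp]: "finite (row_choices n k)"
proof -
  have "row_choices n k \<subseteq> {xs. set xs \<subseteq> {1..n} \<and> length xs = k}" by (auto simp: row_choices_def)
  then show ?thesis using finite_lists_length_eq[of "{1..n}" k] finite_subset by blast
qed

lemma finite_supp_placement [simp, intro]: "finite (supp (placement rs Ts))"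
  by (simp add: placement_def)

lemma finite_supp_aug_psum [simp, intro]: "finite (supp (aug_psum n Ts))"
  unfolding aug_psum_def by auto

lemma barred_append: "barred (a @ b) = barred a @ barred b"
  by (induction a rule: barred.induct) auto

lemma row_thetas_append: "row_thetas r (a @ b) = row_thetas r a @ row_thetas r b"
  by (simp add: row_thetas_def barred_append)

lemma length_row_thetas: "length (row_thetas r L) = length (barred L)"
  by (simp add: row_thetas_def)

lemma row_exp_append: "row_exp r (a @ b) = (\<lambda>p. row_exp r a p + row_exp r b p)"
  by (auto simp: row_exp_def)

lemma row_exp_mset_eq: "mset a = mset b \<Longrightarrow> row_exp r a = row_exp r b"
  unfolding row_exp_def by (simp only:)

lemma length_rows_thetas:
  "length rs = length Ts \<Longrightarrow> length (rows_thetas rs Ts) = length (barred (concat Ts))"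
  by (induction rs Ts rule: rows_thetas.induct) (simp_all add: barred_append length_row_thetas)

lemma rows_thetas_split:
  "length rs = length Ts \<Longrightarrow> j < length Ts \<Longrightarrow> rows_thetas rs Ts =
    rows_thetas (take j rs) (take j Ts) @ row_thetas (rs ! j) (Ts ! j) @
    rows_thetas (drop (Suc j) rs) (drop (Suc j) Ts)"
proof (induction j arbitrary: rs Ts)
  case 0
  then show ?case by (cases rs; cases Ts) auto
next
  case (Suc j)
  then show ?case by (cases rs; cases Ts) auto
qed

lemma rows_exp_split:
  "length rs = length Ts \<Longrightarrow> j < length Ts \<Longrightarrow> rows_exp rs Ts p =
    rows_exp (take j rs) (take j Ts) p + row_exp (rs ! j) (Ts ! j) p +
    rows_exp (drop (Suc j) rs) (drop (Suc j) Ts) p"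
proof (induction j arbitrary: rs Ts)
  case 0
  then show ?case by (cases rs; cases Ts) auto
next
  case (Suc j)
  then show ?case by (cases rs; cases Ts) auto
qed

lemma concat_list_update:
  "j < length Ts \<Longrightarrow> concat (Ts[j := X]) = concat (take j Ts) @ X @ concat (drop (Suc j) Ts)"
  by (simp add: upd_conv_take_nth_drop)

lemma concat_nth_split:
  "j < length Ts \<Longrightarrow> concat Ts = concat (take j Ts) @ Ts ! j @ concat (drop (Suc j) Ts)"
  by (metis append_take_drop_id concat.simps(2) concat_append Cons_nth_drop_Suc)

lemma mset_concat_merge:
  assumes "j < length Ts"
  shows "mset (concat (Ts[j := T @ Ts ! j])) = mset (T @ concat Ts)"
  using concat_list_update[OF assms, of "T @ Ts ! j"] concat_nth_split[OF assms] by simp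

text \<open>Placing \<open>T\<close> in the row already occupied by \<open>Ts ! j\<close>: the odd variables of \<open>T\<close> move past those
  of the words before \<open>Ts ! j\<close>.\<close>

lemma placement_merge:
  assumes "length rs = length Ts" "j < length Ts"
  shows "placement (rs ! j # rs) (T # Ts) = smul (merge_sign T Ts j) (placement rs (Ts[j := T @ Ts ! j]))"
proof -
  let ?r = "rs ! j"
  let ?Ts' = "Ts[j := T @ Ts ! j]"
  have len': "length rs = length ?Ts'" "j < length ?Ts'" using assms by auto
  have parts: "take j ?Ts' = take j Ts" "drop (Suc j) ?Ts' = drop (Suc j) Ts" "?Ts' ! j = T @ Ts ! j"
    using assms by auto
  let ?A = "rows_thetas (take j rs) (take j Ts)"
  let ?B = "rows_thetas (drop (Suc j) rs) (drop (Suc j) Ts)"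
  have w1: "rows_thetas (?r # rs) (T # Ts) = row_thetas ?r T @ ?A @ (row_thetas ?r (Ts ! j) @ ?B)"
    using rows_thetas_split[OF assms] by simp
  have w2: "rows_thetas rs ?Ts' = ?A @ row_thetas ?r T @ (row_thetas ?r (Ts ! j) @ ?B)"
    using rows_thetas_split[OF len'] parts by (simp add: row_thetas_append)
  have e: "rows_exp (?r # rs) (T # Ts) = rows_exp rs ?Ts'"
  proof
    fix p
    show "rows_exp (?r # rs) (T # Ts) p = rows_exp rs ?Ts' p"
      using rows_exp_split[OF assms, of p] rows_exp_split[OF len', of p] parts
      by (simp add: row_exp_append)
  qed
  have len: "length ?A = length (barred (concat (take j Ts)))"
    using assms by (simp add: length_rows_thetas)
  show ?thesis
    unfolding placement_def w1 w2 e word_monomial_swap[of _ "row_thetas ?r T" ?A] merge_sign_def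
      length_row_thetas len ..
qed

lemma placement_Cons: "alg_mul (placement [r] [T]) (placement rs Ts) = placement (r # rs) (T # Ts)"
proof -
  have "(\<lambda>p. rows_exp [r] [T] p + rows_exp rs Ts p) = rows_exp (r # rs) (T # Ts)" by auto
  then show ?thesis unfolding placement_def alg_mul_word_monomial by simp
qed

lemma row_choices_Suc:
  "bij_betw (\<lambda>(rs, r). r # rs) (SIGMA rs:row_choices n k. {1..n} - set rs) (row_choices n (Suc k))"
proof (rule bij_betwI')
  fix y assume "y \<in> row_choices n (Suc k)"
  then obtain r rs where "y = r # rs" "length rs = k" "distinct (r # rs)" "set (r # rs) \<subseteq> {1..n}"
    unfolding row_choices_def by (cases y) auto
  then show "\<exists>x\<in>(SIGMA rs:row_choices n k. {1..n} - set rs). y = (case x of (rs, r) \<Rightarrow> r # rs)"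
    by (intro bexI[of _ "(rs, r)"]) (auto simp: row_choices_def)
qed (auto simp: row_choices_def)

lemma row_choices_one: "row_choices n (Suc 0) = (\<lambda>r. [r]) ` {1..n}"
  by (auto simp: row_choices_def length_Suc_conv)

lemma word_psum_eq_sum: "word_psum n L = (\<Sum>r\<in>{1..n}. word_monomial (row_exp r L) (row_thetas r L))"
proof -
  have "placement [r] [L] = word_monomial (row_exp r L) (row_thetas r L)" for r
    by (simp add: placement_def)
  then show ?thesis
    by (simp add: word_psum_def aug_psum_def row_choices_one sum.reindex inj_on_def)
qed

lemma sum_set_distinct_conv_nth:
  assumes "distinct rs"
  shows "(\<Sum>r\<in>set rs. g r) = (\<Sum>j<length rs. g (rs ! j))"
proof -
  have "set rs = (\<lambda>j. rs ! j) ` {..<length rs}" by (auto simp: set_conv_nth)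
  moreover have "inj_on (\<lambda>j. rs ! j) {..<length rs}"
    using assms by (auto simp: inj_on_def nth_eq_iff_index_eq)
  ultimately show ?thesis by (simp add: sum.reindex)
qed

lemma alg_mul_word_psum_aug_psum:
  "alg_mul (word_psum n T) (aug_psum n Ts) =
     aug_psum n (T # Ts) + (\<Sum>j<length Ts. smul (merge_sign T Ts j) (aug_psum n (Ts[j := T @ Ts ! j])))"
proof -
  let ?k = "length Ts"
  let ?I = "row_choices n ?k"
  let ?p = "\<lambda>rs. placement rs (T # Ts)"
  have "alg_mul (word_psum n T) (aug_psum n Ts) = (\<Sum>rs\<in>?I. \<Sum>r\<in>{1..n}. ?p (r # rs))"
    unfolding word_psum_def aug_psum_def[of n Ts] aug_psum_def[of n "[T]"]
    by (simp add: alg_mul_sum_left alg_mul_sum_right finite_supp_sum row_choices_one sum.reindex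
        inj_on_def placement_Cons)
  also have "\<dots> = (\<Sum>rs\<in>?I. (\<Sum>r\<in>{1..n} - set rs. ?p (r # rs)) + (\<Sum>r\<in>set rs. ?p (r # rs)))"
    by (intro sum.cong refl sum.subset_diff) (auto simp: row_choices_def)
  also have "\<dots> = (\<Sum>rs\<in>?I. \<Sum>r\<in>{1..n} - set rs. ?p (r # rs)) + (\<Sum>rs\<in>?I. \<Sum>r\<in>set rs. ?p (r # rs))"
    by (rule sum.distrib)
  also have "(\<Sum>rs\<in>?I. \<Sum>r\<in>{1..n} - set rs. ?p (r # rs)) = aug_psum n (T # Ts)"
  proof -
    have "(\<Sum>rs\<in>?I. \<Sum>r\<in>{1..n} - set rs. ?p (r # rs)) =
        (\<Sum>x\<in>(SIGMA rs:?I. {1..n} - set rs). ?p ((\<lambda>(rs, r). r # rs) x))"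
      by (subst sum.Sigma) (auto simp: split_beta)
    also have "\<dots> = aug_psum n (T # Ts)"
      unfolding aug_psum_def length_Cons
      by (rule sum.reindex_bij_betw[OF row_choices_Suc])
    finally show ?thesis .
  qed
  also have "(\<Sum>rs\<in>?I. \<Sum>r\<in>set rs. ?p (r # rs)) =
      (\<Sum>rs\<in>?I. \<Sum>j<?k. smul (merge_sign T Ts j) (placement rs (Ts[j := T @ Ts ! j])))"
  proof (rule sum.cong[OF refl])
    fix rs assume "rs \<in> ?I"
    then have rs: "length rs = ?k" "distinct rs" by (auto simp: row_choices_def)
    then show "(\<Sum>r\<in>set rs. ?p (r # rs)) =
        (\<Sum>j<?k. smul (merge_sign T Ts j) (placement rs (Ts[j := T @ Ts ! j])))"
      by (simp add: sum_set_distinct_conv_nth placement_merge)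
  qed
  also have "\<dots> = (\<Sum>j<?k. smul (merge_sign T Ts j) (aug_psum n (Ts[j := T @ Ts ! j])))"
    by (subst sum.swap) (simp add: aug_psum_def smul_sum)
  finally show ?thesis .
qed

lemma word_psum_merge:
  assumes "j < length Ts"
  shows "word_psum n (concat (Ts[j := T @ Ts ! j])) = smul (merge_sign T Ts j) (word_psum n (T @ concat Ts))"
proof -
  let ?C1 = "concat (take j Ts)"
  let ?C2 = "concat (drop (Suc j) Ts)"
  have e1: "T @ concat Ts = T @ ?C1 @ Ts ! j @ ?C2" using concat_nth_split[OF assms] by simp
  have e2: "concat (Ts[j := T @ Ts ! j]) = ?C1 @ T @ Ts ! j @ ?C2" using concat_list_update[OF assms] by simp
  have "word_monomial (row_exp r (?C1 @ T @ Ts ! j @ ?C2)) (row_thetas r (?C1 @ T @ Ts ! j @ ?C2)) =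
      smul (merge_sign T Ts j) (word_monomial (row_exp r (T @ ?C1 @ Ts ! j @ ?C2))
        (row_thetas r (T @ ?C1 @ Ts ! j @ ?C2)))" for r
  proof -
    have "row_exp r (?C1 @ T @ Ts ! j @ ?C2) = row_exp r (T @ ?C1 @ Ts ! j @ ?C2)"
      by (rule row_exp_mset_eq) simp
    moreover have "length (row_thetas r ?C1) * length (row_thetas r T) =
        length (barred T) * length (barred ?C1)"
      by (simp add: length_row_thetas)
    ultimately show ?thesis
      unfolding row_thetas_append word_monomial_swap[of _ "row_thetas r ?C1" "row_thetas r T"]
        merge_sign_def by simp
  qed
  then show ?thesis unfolding word_psum_eq_sum e1 e2 smul_sum by simp
qed

definition letters :: "nat \<Rightarrow> nat \<Rightarrow> (nat + nat) set" where
  "letters m m' = Inl ` {1..m} \<union> Inr ` {1..m'}"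

lemma psum_eq_sum_monomial: "psum n S = (\<Sum>r\<in>{1..n}. monomial (row_mono r S))"
proof
  fix \<mu>
  have "(\<Sum>r\<in>{1..n}. monomial (row_mono r S)) \<mu> = (\<Sum>r\<in>{1..n}. if row_mono r S = \<mu> then 1 else 0)"
    unfolding sum_fun_apply by (intro sum.cong) (auto simp: monomial_def)
  also have "\<dots> = of_nat (card {r \<in> {1..n}. row_mono r S = \<mu>})"
    by (simp add: sum.If_cases Int_def conj_commute)
  finally show "psum n S \<mu> = (\<Sum>r\<in>{1..n}. monomial (row_mono r S)) \<mu>" by (simp add: psum_def)
qed

lemma set_barred: "i \<in> set (barred L) \<longleftrightarrow> Inr i \<in> set L"
  by (induction L rule: barred.induct) auto

lemma count_barred: "count (mset (barred L)) i = count (mset L) (Inr i)"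
  by (induction L rule: barred.induct) auto

lemma distinct_iff_count_le_1: "distinct xs \<longleftrightarrow> (\<forall>a. count (mset xs) a \<le> 1)"
proof
  assume "\<forall>a. count (mset xs) a \<le> 1"
  then have "count (mset xs) a = (if a \<in> set xs then 1 else 0)" for a
    using count_eq_zero_iff[of "mset xs" a] by (auto simp: le_Suc_eq)
  then show "distinct xs" by (simp add: distinct_count_atmost_1)
qed (simp add: distinct_count_atmost_1)

lemma admissible_ms_mset_iff:
  "admissible_ms n m m' (mset L) \<longleftrightarrow> set L \<subseteq> letters m m' \<and> distinct (barred L) \<and> length L \<le> n"
  by (simp add: admissible_ms_def letters_def distinct_iff_count_le_1 count_barred)

lemma word_monomial_row:
  assumes "distinct (barred L)"
  shows "word_monomial (row_exp r L) (row_thetas r L) =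
    smul ((-1) ^ inversions (barred L)) (monomial (row_mono r (mset L)))"
proof -
  have "distinct (row_thetas r L)" using assms by (simp add: row_thetas_def distinct_map inj_on_def)
  moreover have "row_mono r (mset L) = (row_exp r L, set (row_thetas r L))"
    by (auto simp: row_mono_def row_exp_def row_thetas_def set_barred)
  ultimately show ?thesis by (simp add: word_monomial_def word_sign_def row_thetas_def inversions_map_Pair)
qed

lemma word_psum_eq_psum:
  assumes "distinct (barred L)"
  shows "word_psum n L = smul ((-1) ^ inversions (barred L)) (psum n (mset L))"
  unfolding word_psum_eq_sum psum_eq_sum_monomial smul_sum by (simp add: word_monomial_row[OF assms])

lemma word_psum_eq_zero:
  assumes "\<not> distinct (barred L)"
  shows "word_psum n L = 0"
proof -
  have "\<not> distinct (row_thetas r L)" for r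
    using assms by (simp add: row_thetas_def distinct_map inj_on_def)
  then show ?thesis unfolding word_psum_eq_sum by (simp add: word_monomial_def)
qed

abbreviation psum_subalg :: "nat \<Rightarrow> nat \<Rightarrow> nat \<Rightarrow> salg set" where
  "psum_subalg n m m' \<equiv> gen_subalg {psum n S | S. admissible_ms n m m' S}"

lemma finite_supp_psum [simp, intro]: "finite (supp (psum n S))"
  unfolding psum_eq_sum_monomial by auto

lemma finite_supp_psum_subalg: "f \<in> psum_subalg n m m' \<Longrightarrow> finite (supp f)"
proof (induction rule: gen_subalg.induct)
  case (const c)
  then show ?case using finite_subset[OF supp_alg_const] by blast
next
  case (add f g)
  show ?case unfolding alg_add_eq_plus using add.IH by (rule finite_supp_plus)
qed auto

lemma psum_subalg_smul:
  assumes "f \<in> psum_subalg n m m'"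
  shows "smul c f \<in> psum_subalg n m m'"
proof -
  have "alg_mul (alg_const c) f \<in> psum_subalg n m m'"
    by (rule gen_subalg.mul[OF gen_subalg.const assms])
  then show ?thesis by (simp only: alg_mul_const[OF finite_supp_psum_subalg[OF assms]])
qed

lemma psum_subalg_smul_cancel:
  assumes "smul c f \<in> psum_subalg n m m'" "c \<noteq> 0"
  shows "f \<in> psum_subalg n m m'"
  using psum_subalg_smul[OF assms(1), of "1 / c"] assms(2) by (simp add: smul_smul)

lemma psum_subalg_zero: "0 \<in> psum_subalg n m m'"
  using gen_subalg.const[of 0] by (simp add: alg_const_eq_smul)

lemma psum_subalg_one: "monomial (\<lambda>_. 0, {}) \<in> psum_subalg n m m'"
  using gen_subalg.const[of 1] by (simp add: alg_const_eq_smul)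

lemma psum_subalg_plus: "f \<in> psum_subalg n m m' \<Longrightarrow> g \<in> psum_subalg n m m' \<Longrightarrow> f + g \<in> psum_subalg n m m'"
  using gen_subalg.add[of f _ g] unfolding alg_add_eq_plus by blast

lemma psum_subalg_diff:
  assumes "f \<in> psum_subalg n m m'" "g \<in> psum_subalg n m m'"
  shows "f - g \<in> psum_subalg n m m'"
proof -
  have "f + smul (-1) g \<in> psum_subalg n m m'"
    by (intro psum_subalg_plus psum_subalg_smul assms)
  moreover have "f + smul (-1) g = f - g" by (auto simp: smul_def)
  ultimately show ?thesis by simp
qed

lemma psum_subalg_sum: "(\<And>i. i \<in> I \<Longrightarrow> F i \<in> psum_subalg n m m') \<Longrightarrow> sum F I \<in> psum_subalg n m m'"
  by (induction I rule: infinite_finite_induct) (auto simp: psum_subalg_zero psum_subalg_plus)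

lemma word_psum_in_psum_subalg_short:
  assumes "set L \<subseteq> letters m m'" "length L \<le> n"
  shows "word_psum n L \<in> psum_subalg n m m'"
proof (cases "distinct (barred L)")
  case True
  then have "admissible_ms n m m' (mset L)"
    using assms by (simp add: admissible_ms_mset_iff)
  then have "psum n (mset L) \<in> psum_subalg n m m'"
    by (blast intro: gen_subalg.gen)
  then show ?thesis unfolding word_psum_eq_psum[OF True] by (rule psum_subalg_smul)
qed (simp add: word_psum_eq_zero psum_subalg_zero)

section \<open>Newton's reduction\<close>

lemma aug_psum_Nil: "aug_psum n [] = monomial (\<lambda>_. 0, {})"
proof -
  have "row_choices n 0 = {[]}" by (auto simp: row_choices_def)
  then show ?thesis by (simp add: aug_psum_def placement_def word_monomial_def word_sign_def)
qed

lemma aug_psum_Cons: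
  "aug_psum n (T # Ts) = alg_mul (word_psum n T) (aug_psum n Ts) -
    (\<Sum>j<length Ts. smul (merge_sign T Ts j) (aug_psum n (Ts[j := T @ Ts ! j])))"
  using alg_mul_word_psum_aug_psum[of n T Ts] by (simp add: eq_diff_eq)

lemma aug_psum_eq_zero: "n < length Ts \<Longrightarrow> aug_psum n Ts = 0"
proof -
  assume n: "n < length Ts"
  have "length Ts \<le> n" if "rs \<in> row_choices n (length Ts)" for rs
    using that card_mono[of "{1..n}" "set rs"] distinct_card[of rs] by (auto simp: row_choices_def)
  then have "row_choices n (length Ts) = {}" using n by fastforce
  then show ?thesis by (simp add: aug_psum_def)
qed

lemma aug_psum_in_psum_subalg_if_words:
  assumes words: "\<And>L. set L \<subseteq> letters m m' \<Longrightarrow> length L \<le> d \<Longrightarrow> word_psum n L \<in> psum_subalg n m m'"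
  shows "set (concat Ts) \<subseteq> letters m m' \<Longrightarrow> length (concat Ts) \<le> d \<Longrightarrow> aug_psum n Ts \<in> psum_subalg n m m'"
proof (induction "length Ts" arbitrary: Ts rule: less_induct)
  case less
  show ?case
  proof (cases Ts)
    case Nil
    then show ?thesis by (simp add: aug_psum_Nil psum_subalg_one)
  next
    case (Cons T Ts')
    have merged: "aug_psum n (Ts'[j := T @ Ts' ! j]) \<in> psum_subalg n m m'" if "j < length Ts'" for j
    proof (rule less.hyps)
      have "mset (concat (Ts'[j := T @ Ts' ! j])) = mset (concat Ts)"
        using mset_concat_merge[OF that, of T] Cons by simp
      then show "set (concat (Ts'[j := T @ Ts' ! j])) \<subseteq> letters m m'"
        "length (concat (Ts'[j := T @ Ts' ! j])) \<le> d"
        using less.prems by (metis set_mset_mset, metis size_mset)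
    qed (use Cons in simp)
    have "word_psum n T \<in> psum_subalg n m m'" "aug_psum n Ts' \<in> psum_subalg n m m'"
      using less Cons by (auto intro!: words less.hyps)
    then show ?thesis unfolding Cons aug_psum_Cons
      by (intro psum_subalg_diff gen_subalg.mul psum_subalg_sum psum_subalg_smul merged) auto
  qed
qed

text \<open>Rearranging \<open>aug_psum_Cons\<close> using \<open>p(concat (Ts[j := T @ Ts ! j])) = \<epsilon>\<^sub>j p(T @ concat Ts)\<close>
  (\<open>word_psum_merge\<close>) and \<open>\<epsilon>\<^sub>j\<^sup>2 = 1\<close>, where \<open>\<epsilon>\<^sub>j\<close> is the merge sign.\<close>

lemma aug_psum_Cons_newton:
  assumes "length Ts = Suc k"
  shows "aug_psum n (T # Ts) - smul ((-1) ^ Suc k * fact (Suc k)) (word_psum n (T @ concat Ts)) =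
    alg_mul (word_psum n T) (aug_psum n Ts) -
    (\<Sum>j<length Ts. smul (merge_sign T Ts j) (aug_psum n (Ts[j := T @ Ts ! j]) -
      smul ((-1) ^ k * fact k) (word_psum n (concat (Ts[j := T @ Ts ! j])))))"
proof
  fix \<nu>
  let ?Q = "word_psum n (T @ concat Ts)"
  let ?E = "\<lambda>j. aug_psum n (Ts[j := T @ Ts ! j])"
  let ?\<epsilon> = "merge_sign T Ts"
  let ?c = "(-1) ^ k * fact k :: complex"
  have "smul (?\<epsilon> j) (?E j - smul ?c (word_psum n (concat (Ts[j := T @ Ts ! j])))) \<nu> =
      ?\<epsilon> j * ?E j \<nu> - ?c * ?Q \<nu>" if "j < length Ts" for j
  proof -
    have "smul (?\<epsilon> j) (?E j - smul ?c (word_psum n (concat (Ts[j := T @ Ts ! j])))) \<nu> =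
        ?\<epsilon> j * ?E j \<nu> - ?\<epsilon> j * (?c * (?\<epsilon> j * ?Q \<nu>))"
      by (simp add: word_psum_merge[OF that] smul_def right_diff_distrib)
    also have "?\<epsilon> j * (?c * (?\<epsilon> j * ?Q \<nu>)) = ?c * ?Q \<nu> * (?\<epsilon> j * ?\<epsilon> j)"
      by (simp only: mult_ac)
    finally show ?thesis by (simp only: merge_sign_square mult_1_right)
  qed
  then have "(\<Sum>j<length Ts. smul (merge_sign T Ts j) (?E j -
      smul ?c (word_psum n (concat (Ts[j := T @ Ts ! j]))))) \<nu> =
      (\<Sum>j<length Ts. merge_sign T Ts j * ?E j \<nu> - ?c * ?Q \<nu>)"
    unfolding sum_fun_apply by (intro sum.cong) auto
  also have "\<dots> = (\<Sum>j<length Ts. merge_sign T Ts j * ?E j \<nu>) - of_nat (Suc k) * (?c * ?Q \<nu>)"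
    using assms by (simp add: sum_subtractf)
  finally have merged: "(\<Sum>j<length Ts. smul (merge_sign T Ts j) (?E j -
      smul ?c (word_psum n (concat (Ts[j := T @ Ts ! j]))))) \<nu> =
      (\<Sum>j<length Ts. merge_sign T Ts j * ?E j \<nu>) - of_nat (Suc k) * (?c * ?Q \<nu>)" .
  have recursion: "aug_psum n (T # Ts) \<nu> =
      alg_mul (word_psum n T) (aug_psum n Ts) \<nu> - (\<Sum>j<length Ts. merge_sign T Ts j * ?E j \<nu>)"
    by (subst aug_psum_Cons) (simp add: sum_fun_apply smul_def)
  have coeff: "(-1) ^ Suc k * fact (Suc k) = - (of_nat (Suc k) * ?c)"
    by (simp add: algebra_simps)
  show "(aug_psum n (T # Ts) - smul ((-1) ^ Suc k * fact (Suc k)) ?Q) \<nu> =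
    (alg_mul (word_psum n T) (aug_psum n Ts) - (\<Sum>j<length Ts. smul (merge_sign T Ts j) (?E j -
      smul ?c (word_psum n (concat (Ts[j := T @ Ts ! j])))))) \<nu>"
    by (simp only: minus_apply coeff recursion merged) (simp add: smul_def algebra_simps)
qed

lemma aug_psum_newton:
  assumes shorter: "\<And>L. set L \<subseteq> letters m m' \<Longrightarrow> length L < d \<Longrightarrow> word_psum n L \<in> psum_subalg n m m'"
  shows "length Ts = k \<Longrightarrow> [] \<notin> set (T # Ts) \<Longrightarrow> set (concat (T # Ts)) \<subseteq> letters m m' \<Longrightarrow>
    length (concat (T # Ts)) = d \<Longrightarrow>
    aug_psum n (T # Ts) - smul ((-1) ^ k * fact k) (word_psum n (concat (T # Ts))) \<in> psum_subalg n m m'"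
proof (induction k arbitrary: T Ts)
  case 0
  then have "aug_psum n (T # Ts) - smul ((-1) ^ 0 * fact 0) (word_psum n (concat (T # Ts))) = 0"
    by (simp add: word_psum_def)
  then show ?case using psum_subalg_zero by (simp only:)
next
  case (Suc k)
  let ?U = "\<lambda>j. Ts[j := T @ Ts ! j]"
  have merged: "aug_psum n (?U j) - smul ((-1) ^ k * fact k) (word_psum n (concat (?U j)))
      \<in> psum_subalg n m m'" if j: "j < length Ts" for j
  proof -
    have "length (?U j) = Suc k" using Suc.prems(1) by simp
    then obtain Y Ys where YYs: "?U j = Y # Ys" "length Ys = k"
      by (cases "?U j") auto
    have "mset (concat (Y # Ys)) = mset (concat (T # Ts))"
      using mset_concat_merge[OF j, of T] YYs by simp
    then have "set (concat (Y # Ys)) = set (concat (T # Ts))"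
      "length (concat (Y # Ys)) = length (concat (T # Ts))"
      by (metis set_mset_mset, metis size_mset)
    moreover have "[] \<notin> set (Y # Ys)"
      using Suc.prems(2) set_update_subset_insert[of Ts j "T @ Ts ! j"] YYs(1) by auto
    ultimately have "aug_psum n (Y # Ys) - smul ((-1) ^ k * fact k) (word_psum n (concat (Y # Ys)))
        \<in> psum_subalg n m m'"
      using Suc.prems(3,4) by (intro Suc.IH[OF YYs(2)]) simp_all
    then show ?thesis using YYs by simp
  qed
  have "concat Ts \<noteq> []" "T \<noteq> []"
    using Suc.prems(1,2) by (cases Ts; auto)+
  then have lengths: "length T < d" "length (concat Ts) < d"
    using Suc.prems(4) by auto
  have "word_psum n T \<in> psum_subalg n m m'"
    using Suc.prems(3) lengths by (auto intro: shorter)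
  moreover have "aug_psum n Ts \<in> psum_subalg n m m'"
    using Suc.prems(3) lengths shorter by (intro aug_psum_in_psum_subalg_if_words[of m m' "d - 1"]) auto
  ultimately show ?case
    unfolding concat.simps aug_psum_Cons_newton[OF Suc.prems(1)]
    by (intro psum_subalg_diff gen_subalg.mul psum_subalg_sum psum_subalg_smul merged) auto
qed

lemma word_psum_in_psum_subalg:
  assumes "n \<ge> 1"
  shows "set L \<subseteq> letters m m' \<Longrightarrow> word_psum n L \<in> psum_subalg n m m'"
proof (induction "length L" arbitrary: L rule: less_induct)
  case less
  show ?case
  proof (cases "length L \<le> n")
    case True
    then show ?thesis using word_psum_in_psum_subalg_short less.prems by blast
  next
    case False
    then obtain a L' where L: "L = a # L'" using assms by (cases L) auto
    let ?Ts = "map (\<lambda>x. [x]) L'"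
    have "concat ([a] # ?Ts) = L" using L by (simp add: concat_map_singleton)
    moreover have "aug_psum n ([a] # ?Ts) = 0"
      using False L by (intro aug_psum_eq_zero) simp
    ultimately have "0 - smul ((-1) ^ length ?Ts * fact (length ?Ts)) (word_psum n L) \<in> psum_subalg n m m'"
      using aug_psum_newton[of m m' "length L" n ?Ts "length ?Ts" "[a]"] less by auto
    then have "smul (- ((-1) ^ length ?Ts * fact (length ?Ts))) (word_psum n L) \<in> psum_subalg n m m'"
      by (simp add: smul_def fun_diff_def)
    then show ?thesis by (rule psum_subalg_smul_cancel) simp
  qed
qed

lemma aug_psum_in_psum_subalg:
  assumes "n \<ge> 1" "set (concat Ts) \<subseteq> letters m m'"
  shows "aug_psum n Ts \<in> psum_subalg n m m'"
  using word_psum_in_psum_subalg[OF assms(1)] assms(2)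
  by (intro aug_psum_in_psum_subalg_if_words[of m m' "length (concat Ts)"]) auto

section \<open>Invariance of the power sums\<close>

lemma exp_perm_row_exp:
  assumes "\<sigma> permutes S"
  shows "exp_perm \<sigma> (row_exp r T) = row_exp (\<sigma> r) T"
proof
  fix p
  show "exp_perm \<sigma> (row_exp r T) p = row_exp (\<sigma> r) T p"
    by (cases p) (auto simp: exp_perm_def row_exp_def permutes_inv_eq[OF assms])
qed

lemma exp_perm_rows_exp:
  assumes "\<sigma> permutes S"
  shows "exp_perm \<sigma> (rows_exp rs Ts) = rows_exp (map \<sigma> rs) Ts"
  by (induction rs Ts rule: rows_exp.induct)
    (simp_all add: exp_perm_add exp_perm_row_exp[OF assms], auto simp: exp_perm_def)

lemma map_row_perm_rows_thetas: "map (row_perm \<sigma>) (rows_thetas rs Ts) = rows_thetas (map \<sigma> rs) Ts"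
  by (induction rs Ts rule: rows_thetas.induct) (auto simp: row_thetas_def row_perm_def)

lemma alg_act_placement:
  assumes "\<sigma> permutes S"
  shows "alg_act \<sigma> (placement rs Ts) = placement (map \<sigma> rs) Ts"
  unfolding placement_def alg_act_word_monomial[OF permutes_inj[OF assms]]
    exp_perm_rows_exp[OF assms] map_row_perm_rows_thetas ..

lemma bij_betw_map_row_choices:
  assumes "\<sigma> permutes {1..n}"
  shows "bij_betw (map \<sigma>) (row_choices n k) (row_choices n k)"
proof -
  have inj: "inj \<sigma>" and im: "\<sigma> ` {1..n} = {1..n}"
    using permutes_inj[OF assms] permutes_image[OF assms] by auto
  have "map \<sigma> rs \<in> row_choices n k" if "rs \<in> row_choices n k" for rs
  proof -
    have "set (map \<sigma> rs) \<subseteq> \<sigma> ` {1..n}"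
      using that by (auto simp: row_choices_def)
    then show ?thesis
      using that inj im by (auto simp: row_choices_def distinct_map inj_on_subset)
  qed
  moreover have "inj_on (map \<sigma>) (row_choices n k)"
    using inj by (simp add: inj_on_def inj_map_eq_map)
  ultimately show ?thesis
    by (simp add: bij_betw_def endo_inj_surj image_subset_iff)
qed

lemma alg_act_aug_psum:
  assumes "\<sigma> permutes {1..n}"
  shows "alg_act \<sigma> (aug_psum n Ts) = aug_psum n Ts"
proof -
  have "alg_act \<sigma> (aug_psum n Ts) = (\<Sum>rs\<in>row_choices n (length Ts). placement (map \<sigma> rs) Ts)"
    unfolding aug_psum_def by (simp add: alg_act_sum alg_act_placement[OF assms])
  also have "\<dots> = aug_psum n Ts"
    unfolding aug_psum_def by (rule sum.reindex_bij_betw[OF bij_betw_map_row_choices[OF assms]])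
  finally show ?thesis .
qed

lemma alg_act_alg_const: "alg_act \<sigma> (alg_const c) = alg_const c"
proof -
  have "mono_act \<sigma> (\<lambda>_. 0, {}) = (\<lambda>_. 0, {})" by (auto simp: mono_act_eq exp_perm_def)
  then show ?thesis by (simp add: alg_const_eq_smul alg_act_smul_monomial perm_sign_def)
qed

lemma valid_mono_finite: "valid_mono n m m' \<mu> \<Longrightarrow> finite (snd \<mu>)"
  unfolding valid_mono_def by (meson finite_SigmaI finite_atLeastAtMost finite_subset)

lemma valid_mono_mul:
  "valid_mono n m m' \<alpha> \<Longrightarrow> valid_mono n m m' \<beta> \<Longrightarrow> valid_mono n m m' (mono_mul \<alpha> \<beta>)"
  unfolding valid_mono_def mono_mul_def by auto

lemma valid_mono_row_mono:
  assumes "admissible_ms n m m' S" "r \<in> {1..n}"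
  shows "valid_mono n m m' (row_mono r S)"
  using assms unfolding valid_mono_def row_mono_def admissible_ms_def
  by (auto split: if_splits dest!: count_inI)

lemma psum_subalg_subset_carrier: "f \<in> psum_subalg n m m' \<Longrightarrow> f \<in> carrier_alg n m m'"
proof (induction rule: gen_subalg.induct)
  case (const c)
  have "valid_mono n m m' (\<lambda>_. 0, {})" by (simp add: valid_mono_def)
  then show ?case
    using supp_alg_const[of c] finite_subset[OF supp_alg_const] by (auto simp: carrier_alg_def)
next
  case (gen g)
  then obtain S where S: "g = psum n S" "admissible_ms n m m' S" by auto
  have supp: "supp g \<subseteq> (\<lambda>r. row_mono r S) ` {1..n}"
  proof
    fix \<mu> assume "\<mu> \<in> supp g"
    then have "{r \<in> {1..n}. row_mono r S = \<mu>} \<noteq> {}" by (auto simp: S(1) supp_def psum_def)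
    then show "\<mu> \<in> (\<lambda>r. row_mono r S) ` {1..n}" by blast
  qed
  then have "finite (supp g)" by (rule finite_subset) simp
  with supp show ?case
    using valid_mono_row_mono[OF S(2)] by (auto simp: carrier_alg_def)
next
  case (add f g)
  have "supp (alg_add f g) \<subseteq> supp f \<union> supp g" by (simp only: alg_add_eq_plus supp_plus)
  with add.IH show ?case by (auto simp: carrier_alg_def intro: finite_subset)
next
  case (mul f g)
  have "valid_mono n m m' \<mu>" if "\<mu> \<in> supp (alg_mul f g)" for \<mu>
    using that supp_alg_mul[of f g] mul.IH valid_mono_mul by (auto simp: carrier_alg_def)
  with mul.IH show ?case by (auto simp: carrier_alg_def)
qed

lemma psum_subalg_invariant:
  assumes "f \<in> psum_subalg n m m'" "\<sigma> permutes {1..n}"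
  shows "alg_act \<sigma> f = f"
  using assms(1)
proof (induction rule: gen_subalg.induct)
  case (const c)
  then show ?case by (rule alg_act_alg_const)
next
  case (gen g)
  then obtain S where "g = psum n S" "admissible_ms n m m' S" by auto
  moreover obtain L where "mset L = S" using ex_mset by blast
  ultimately have L: "g = psum n (mset L)" "admissible_ms n m m' (mset L)" by simp_all
  then have "distinct (barred L)" by (simp add: admissible_ms_mset_iff)
  then have "g = smul ((-1) ^ inversions (barred L)) (word_psum n L)"
    by (simp add: L(1) word_psum_eq_psum smul_smul power_mult_distrib[symmetric])
  then show ?case
    by (simp add: alg_act_smul word_psum_def alg_act_aug_psum[OF assms(2)])
next
  case (add f g)
  show ?case
    unfolding alg_add_eq_plus alg_act_plus[OF finite_supp_psum_subalg[OF add.hyps(1)]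
      finite_supp_psum_subalg[OF add.hyps(2)]] add.IH ..
next
  case (mul f g)
  have "\<forall>\<alpha>\<in>supp h. finite (snd \<alpha>)" if "h \<in> psum_subalg n m m'" for h
    using psum_subalg_subset_carrier[OF that] valid_mono_finite by (auto simp: carrier_alg_def)
  then show ?case
    using mul alg_act_alg_mul[OF permutes_inj[OF assms(2)]] by (simp add: finite_supp_psum_subalg)
qed

section \<open>Orbit sums of monomials\<close>

definition row_word :: "mono \<Rightarrow> nat \<Rightarrow> nat \<Rightarrow> (nat + nat) list" where
  "row_word \<mu> m r = concat (map (\<lambda>k. replicate (fst \<mu> (r, k)) (Inl k)) [1..<m+1]) @
               map Inr (sorted_list_of_set {i. (r, i) \<in> snd \<mu>})"

lemma count_Inl_replicates:
  "count (mset (concat (map (\<lambda>k. replicate (e k) (Inl k)) ks))) (Inl k) = count (mset ks) k * e k"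
  by (induction ks) auto

lemma barred_replicates: "barred (concat (map (\<lambda>k. replicate (e k) (Inl k)) ks)) = []"
proof (induction ks)
  case (Cons a ks)
  have "barred (replicate j (Inl a)) = []" for j by (induction j) auto
  then show ?case using Cons by (simp add: barred_append)
qed simp

lemma barred_map_Inr: "barred (map Inr ys) = ys"
  by (induction ys) auto

lemma row_exp_row_word:
  assumes "valid_mono n m m' \<mu>"
  shows "row_exp r (row_word \<mu> m r) = (\<lambda>(r', k). if r' = r then fst \<mu> (r, k) else 0)"
proof -
  have "count (mset (row_word \<mu> m r)) (Inl k) = count (mset [1..<m+1]) k * fst \<mu> (r, k)" for k
    by (auto simp: row_word_def count_Inl_replicates count_eq_zero_iff)
  moreover have "count (mset [1..<m+1]) k * fst \<mu> (r, k) = fst \<mu> (r, k)" for k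
    using assms by (cases "k \<in> {1..m}") (auto simp: valid_mono_def)
  ultimately show ?thesis by (auto simp: row_exp_def)
qed

lemma barred_row_word: "barred (row_word \<mu> m r) = sorted_list_of_set {i. (r, i) \<in> snd \<mu>}"
  by (simp add: row_word_def barred_append barred_replicates barred_map_Inr)

lemma set_row_word:
  assumes "valid_mono n m m' \<mu>"
  shows "set (row_word \<mu> m r) \<subseteq> letters m m'"
proof -
  have "{i. (r, i) \<in> snd \<mu>} \<subseteq> {1..m'}" using assms by (auto simp: valid_mono_def)
  then show ?thesis
    using finite_subset[of "{i. (r, i) \<in> snd \<mu>}" "{1..m'}"] by (auto simp: row_word_def letters_def)
qed

lemma rows_exp_map: "distinct rs \<Longrightarrow> rows_exp rs (map g rs) p = (\<Sum>r\<in>set rs. row_exp r (g r) p)"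
  by (induction rs) auto

lemma rows_thetas_map: "rows_thetas rs (map g rs) = concat (map (\<lambda>r. row_thetas r (g r)) rs)"
  by (induction rs) auto

lemma sorted_wrt_concat_rows:
  fixes rs :: "nat list" and g :: "nat \<Rightarrow> nat list"
  assumes "sorted_wrt (<) rs" "\<And>r. sorted_wrt (<) (g r)"
  shows "sorted_wrt (<) (concat (map (\<lambda>r. map (Pair r) (g r)) rs))"
  using assms(1)
proof (induction rs)
  case (Cons r rs)
  have "sorted_wrt (<) (map (Pair r) (g r))"
    unfolding sorted_wrt_map by (rule sorted_wrt_mono_rel[OF _ assms(2)[of r]]) (auto simp: less_prod_def)
  moreover have "\<forall>x\<in>set (map (Pair r) (g r)). \<forall>y\<in>set (concat (map (\<lambda>r. map (Pair r) (g r)) rs)). x < y"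
    using Cons.prems by (auto simp: less_prod_def)
  ultimately show ?case using Cons by (simp add: sorted_wrt_append)
qed simp

lemma set_concat_row_thetas:
  assumes "valid_mono n m m' \<mu>"
  shows "set (concat (map (\<lambda>r. map (Pair r) (sorted_list_of_set {i. (r, i) \<in> snd \<mu>})) [1..<n+1]))
    = snd \<mu>" (is "set ?W = _")
proof
  have finR: "finite {i. (r, i) \<in> snd \<mu>}" for r
    using assms finite_subset[of "{i. (r, i) \<in> snd \<mu>}" "{1..m'}"] by (auto simp: valid_mono_def)
  then show "set ?W \<subseteq> snd \<mu>" by (auto simp del: upt_Suc)
  show "snd \<mu> \<subseteq> set ?W"
  proof
    fix x assume x: "x \<in> snd \<mu>"
    obtain a b where ab: "x = (a, b)" by (cases x)
    have "a \<in> set [1..<n+1]" using assms x ab by (auto simp: valid_mono_def)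
    moreover have "x \<in> set (map (Pair a) (sorted_list_of_set {i. (a, i) \<in> snd \<mu>}))"
      using finR x ab by auto
    ultimately show "x \<in> set ?W" by (auto simp del: upt_Suc)
  qed
qed

lemma placement_row_words:
  assumes "valid_mono n m m' \<mu>"
  shows "placement [1..<n+1] (map (row_word \<mu> m) [1..<n+1]) = monomial \<mu>"
proof -
  let ?rs = "[1..<n+1]"
  let ?R = "\<lambda>r. {i. (r, i) \<in> snd \<mu>}"
  let ?W = "concat (map (\<lambda>r. map (Pair r) (sorted_list_of_set (?R r))) ?rs)"
  have exp: "rows_exp ?rs (map (row_word \<mu> m) ?rs) = fst \<mu>"
  proof
    fix p :: "nat \<times> nat"
    obtain r' k where p: "p = (r', k)" by (cases p)
    have "rows_exp ?rs (map (row_word \<mu> m) ?rs) p = (\<Sum>r\<in>{1..n}. if r' = r then fst \<mu> (r, k) else 0)"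
      unfolding rows_exp_map[OF distinct_upt] using row_exp_row_word[OF assms]
      by (simp add: p atLeastLessThanSuc_atLeastAtMost)
    also have "\<dots> = fst \<mu> p"
      using assms by (auto simp: valid_mono_def p)
    finally show "rows_exp ?rs (map (row_word \<mu> m) ?rs) p = fst \<mu> p" .
  qed
  have thetas: "rows_thetas ?rs (map (row_word \<mu> m) ?rs) = ?W"
    unfolding rows_thetas_map by (simp add: row_thetas_def barred_row_word)
  have "sorted_wrt (<) ?W"
    by (rule sorted_wrt_concat_rows) (simp_all add: strict_sorted_list_of_set del: upt_Suc)
  then have "sorted ?W" "distinct ?W" by (simp_all only: strict_sorted_iff)
  then have sorted_W: "sorted_list_of_set (set ?W) = ?W"
    unfolding sorted_list_of_set_sort_remdups by (simp only: distinct_remdups_id sorted_sort_id)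
  have "monomial \<mu> = monomial (fst \<mu>, set ?W)"
    using set_concat_row_thetas[OF assms] by simp
  also have "\<dots> = word_monomial (fst \<mu>) ?W"
    unfolding monomial_eq_word_monomial[OF List.finite_set] sorted_W ..
  finally show ?thesis
    unfolding placement_def exp thetas by simp
qed

lemma row_choices_eq_permutations_of_set: "row_choices n n = permutations_of_set {1..n}"
proof (intro set_eqI iffI)
  fix rs assume "rs \<in> row_choices n n"
  then show "rs \<in> permutations_of_set {1..n}"
    using distinct_card[of rs] by (simp add: row_choices_def permutations_of_set_def card_subset_eq)
next
  fix rs assume "rs \<in> permutations_of_set {1..n}"
  then show "rs \<in> row_choices n n"
    using distinct_card[of rs] by (simp add: row_choices_def permutations_of_set_def)
qed

lemma bij_betw_permutes_row_choices:
  "bij_betw (\<lambda>\<sigma>. map \<sigma> [1..<n+1]) {\<sigma>. \<sigma> permutes {1..n}} (row_choices n n)"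
proof -
  let ?f = "\<lambda>\<sigma>. map \<sigma> [1..<n+1]"
  let ?P = "{\<sigma>. \<sigma> permutes {1..n}}"
  have set_upt: "set [1..<n+1] = {1..n}" by auto
  have inj: "inj_on ?f ?P"
  proof (rule inj_onI, rule ext)
    fix \<sigma> \<tau> x assume perm: "\<sigma> \<in> ?P" "\<tau> \<in> ?P" and eq: "?f \<sigma> = ?f \<tau>"
    show "\<sigma> x = \<tau> x"
    proof (cases "x \<in> {1..n}")
      case True
      then show ?thesis using eq set_upt by (metis map_eq_conv)
    next
      case False
      then show ?thesis using perm permutes_not_in by (metis mem_Collect_eq)
    qed
  qed
  have sub: "?f ` ?P \<subseteq> row_choices n n"
  proof
    fix rs assume "rs \<in> ?f ` ?P"
    then obtain \<sigma> where \<sigma>: "\<sigma> permutes {1..n}" "rs = ?f \<sigma>" by auto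
    then have "set rs = {1..n}" using permutes_image[OF \<sigma>(1)] set_upt by (simp del: upt_Suc)
    moreover have "distinct rs"
      using \<sigma> inj_on_subset[OF permutes_inj[OF \<sigma>(1)] subset_UNIV] by (simp add: distinct_map del: upt_Suc)
    ultimately show "rs \<in> row_choices n n" using \<sigma>(2) by (simp add: row_choices_def del: upt_Suc)
  qed
  have "card (row_choices n n) = card ?P"
    by (simp add: row_choices_eq_permutations_of_set card_permutations_of_set card_permutations)
  then have "?f ` ?P = row_choices n n"
    using sub inj by (simp add: card_subset_eq card_image)
  with inj show ?thesis by (simp add: bij_betw_def)
qed

lemma orbit_sum_in_psum_subalg:
  assumes "n \<ge> 1" "valid_mono n m m' \<mu>"
  shows "(\<Sum>\<sigma> | \<sigma> permutes {1..n}. alg_act \<sigma> (monomial \<mu>)) \<in> psum_subalg n m m'"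
proof -
  let ?Ts = "map (row_word \<mu> m) [1..<n+1]"
  have "(\<Sum>\<sigma> | \<sigma> permutes {1..n}. alg_act \<sigma> (monomial \<mu>)) =
        (\<Sum>\<sigma> | \<sigma> permutes {1..n}. placement (map \<sigma> [1..<n+1]) ?Ts)"
    unfolding placement_row_words[OF assms(2), symmetric] by (simp add: alg_act_placement del: upt_Suc)
  also have "\<dots> = aug_psum n ?Ts"
    unfolding aug_psum_def length_map length_upt diff_add_inverse2
    by (rule sum.reindex_bij_betw[OF bij_betw_permutes_row_choices])
  moreover have "set (concat ?Ts) \<subseteq> letters m m'"
    using set_row_word[OF assms(2)] by (auto simp del: upt_Suc)
  ultimately show ?thesis
    using aug_psum_in_psum_subalg[OF assms(1)] by simp
qed

lemma invariant_in_psum_subalg: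
  assumes "n \<ge> 1" "f \<in> carrier_alg n m m'" "\<forall>\<sigma>. \<sigma> permutes {1..n} \<longrightarrow> alg_act \<sigma> f = f"
  shows "f \<in> psum_subalg n m m'"
proof -
  let ?P = "{\<sigma>. \<sigma> permutes {1..n}}"
  have fin: "finite (supp f)" and valid: "\<forall>\<mu>\<in>supp f. valid_mono n m m' \<mu>"
    using assms(2) by (auto simp: carrier_alg_def)
  have "smul (fact n) f = (\<Sum>\<sigma>\<in>?P. f)"
    by (rule ext) (simp only: sum_fun_apply, simp add: smul_def card_permutations)
  also have "\<dots> = (\<Sum>\<sigma>\<in>?P. alg_act \<sigma> f)"
    using assms(3) by simp
  also have "\<dots> = (\<Sum>\<sigma>\<in>?P. \<Sum>\<mu>\<in>supp f. smul (f \<mu>) (alg_act \<sigma> (monomial \<mu>)))"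
    by (subst monomial_expansion[OF fin]) (simp add: alg_act_sum alg_act_smul)
  also have "\<dots> = (\<Sum>\<mu>\<in>supp f. smul (f \<mu>) (\<Sum>\<sigma>\<in>?P. alg_act \<sigma> (monomial \<mu>)))"
    by (subst sum.swap) (simp add: smul_sum)
  finally have "smul (fact n) f \<in> psum_subalg n m m'"
    using valid orbit_sum_in_psum_subalg[OF assms(1)] by (simp add: psum_subalg_sum psum_subalg_smul)
  then show ?thesis by (rule psum_subalg_smul_cancel) simp
qed

theorem theorem4p3:
  fixes n m m' :: nat
  assumes "n \<ge> 1"
  shows "{f \<in> carrier_alg n m m'. \<forall>\<sigma>. \<sigma> permutes {1..n} \<longrightarrow> alg_act \<sigma> f = f}
         = gen_subalg {psum n S | S. admissible_ms n m m' S}"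
  using invariant_in_psum_subalg[OF assms] psum_subalg_subset_carrier psum_subalg_invariant by blast

end
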